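(* Let $T$ be a finite rooted tree with a vertex coloring, and suppose that all orbits of $\mathrm{Aut}(T)$ on the set of leaves of $T$ have the same size. Then there exists a vertex-colored graph $H_T$ containing $T$ (with its coloring) as an induced subgraph such that $V(T)$ is invariant under $\mathrm{Aut}(H_T)$, the action of $\mathrm{Aut}(H_T)$ on $V(T)$ is faithful, the action of $\mathrm{Aut}(H_T)$ on the set of leaves of $T$ is semiregular, and the orbits of $\mathrm{Aut}(H_T)$ on $V(T)$ are exactly the orbits of $\mathrm{Aut}(T)$ on $V(T)$.
   Context: For a vertex-colored graph or tree, automorphisms are required to preserve vertex colors (and, for the rooted tree $T$, the tree structure); $\mathrm{Aut}(\cdot)$ denotes the group of such automorphisms. A leaf orbit of $T$ is an orbit of $\mathrm{Aut}(T)$ on the set of leaves. The action of a group on a set is faithful if only the identity acts trivially, and semiregular if every point stabilizer is trivial (only the identity fixes any given point). *)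

theory Defs
  imports Main
begin

definition simple_graph :: "'a set \<Rightarrow> ('a \<Rightarrow> 'a \<Rightarrow> bool) \<Rightarrow> bool" where
  "simple_graph V E \<longleftrightarrow>
     (\<forall>x y. E x y \<longrightarrow> x \<in> V \<and> y \<in> V) \<and>
     (\<forall>x y. E x y \<longrightarrow> E y x) \<and> (\<forall>x. \<not> E x x)"

definition connected_graph :: "'a set \<Rightarrow> ('a \<Rightarrow> 'a \<Rightarrow> bool) \<Rightarrow> bool" where
  "connected_graph V E \<longleftrightarrow> (\<forall>x\<in>V. \<forall>y\<in>V. E\<^sup>*\<^sup>* x y)"

definition is_cycle :: "('a \<Rightarrow> 'a \<Rightarrow> bool) \<Rightarrow> 'a list \<Rightarrow> bool" where
  "is_cycle E vs \<longleftrightarrow> length vs \<ge> 3 \<and> distinct vs \<and>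
     (\<forall>i. Suc i < length vs \<longrightarrow> E (vs ! i) (vs ! Suc i)) \<and>
     E (last vs) (hd vs)"

definition acyclic_graph :: "('a \<Rightarrow> 'a \<Rightarrow> bool) \<Rightarrow> bool" where
  "acyclic_graph E \<longleftrightarrow> (\<forall>vs. \<not> is_cycle E vs)"

definition finite_rooted_tree :: "'a set \<Rightarrow> ('a \<Rightarrow> 'a \<Rightarrow> bool) \<Rightarrow> 'a \<Rightarrow> bool" where
  "finite_rooted_tree V E r \<longleftrightarrow> finite V \<and> r \<in> V \<and> simple_graph V E \<and>
     connected_graph V E \<and> acyclic_graph E"

text \<open>Leaves of a rooted tree: vertices without children, i.e. non-root vertices of
degree 1, and the root if it has no neighbours (one-vertex tree).\<close>
definition tree_leaves :: "'a set \<Rightarrow> ('a \<Rightarrow> 'a \<Rightarrow> bool) \<Rightarrow> 'a \<Rightarrow> 'a set" where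
  "tree_leaves V E r = {v \<in> V. if v = r then {w. E v w} = {} else card {w. E v w} = 1}"

definition graph_aut :: "'a set \<Rightarrow> ('a \<Rightarrow> 'a \<Rightarrow> bool) \<Rightarrow> ('a \<Rightarrow> 'c) \<Rightarrow> ('a \<Rightarrow> 'a) set" where
  "graph_aut V E c = {\<sigma>. bij_betw \<sigma> V V \<and>
     (\<forall>x\<in>V. \<forall>y\<in>V. E (\<sigma> x) (\<sigma> y) \<longleftrightarrow> E x y) \<and> (\<forall>x\<in>V. c (\<sigma> x) = c x)}"

definition rtree_aut :: "'a set \<Rightarrow> ('a \<Rightarrow> 'a \<Rightarrow> bool) \<Rightarrow> ('a \<Rightarrow> 'c) \<Rightarrow> 'a \<Rightarrow> ('a \<Rightarrow> 'a) set" where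
  "rtree_aut V E c r = {\<sigma> \<in> graph_aut V E c. \<sigma> r = r}"

definition orbit_of :: "('a \<Rightarrow> 'a) set \<Rightarrow> 'a \<Rightarrow> 'a set" where
  "orbit_of G x = (\<lambda>\<sigma>. \<sigma> x) ` G"

end

theory Submission
  imports Defs "HOL-Combinatorics.Orbits" "HOL-Combinatorics.Cycles" "HOL-Library.Nat_Bijection"
begin

text \<open>
  The proof rests on a single automorphism \<open>\<sigma>\<close> of \<open>T\<close> whose cyclic group has the same orbits
  on \<open>V(T)\<close> as \<open>Aut(T)\<close>. It is built orbit by orbit from the root downwards: if \<open>\<sigma>\<close> works on a
  parent-closed \<open>Aut(T)\<close>-invariant set \<open>D\<close>, let \<open>x\<close> be a vertex of least depth outside \<open>D\<close> and
  \<open>s\<close> the period under \<open>\<sigma>\<close> of its parent. Then \<open>\<sigma>\<^sup>s\<close> permutes the children of the parent lying in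
  the orbit of \<open>x\<close>; composing \<open>\<sigma>\<close> with an automorphism supported below these children turns this
  permutation into a single cycle, and the new \<open>\<sigma>\<close> works on \<open>D \<union> Aut(T) x\<close>.

  If all leaf orbits have the same size \<open>p\<close>, every leaf has period \<open>p\<close> under \<open>\<sigma>\<close>. As every vertex
  lies above a leaf, \<open>\<sigma>\<^sup>p = 1\<close>, so a power of \<open>\<sigma>\<close> fixing a leaf is trivial.

  \<open>H\<^sub>T\<close> is \<open>T\<close> together with one gadget for each power \<open>\<sigma>\<^sup>j\<close>, \<open>j\<close> below the order of \<open>\<sigma>\<close>: a hub
  joined to pendants, the \<open>i\<close>-th of which is coloured \<open>i\<close> and adjacent to \<open>\<sigma>\<^sup>j(x\<^sub>i)\<close> for a fixed
  enumeration \<open>x\<^sub>0, x\<^sub>1, \<dots>\<close> of \<open>V(T)\<close>. Colour-preserving automorphisms of \<open>H\<^sub>T\<close> are exactly the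
  rotations of the gadgets, acting as powers of \<open>\<sigma>\<close> on \<open>T\<close>, and all claims follow.
\<close>

section \<open>Permutations and walks\<close>

lemma orbit_eq_if_in_orbit:
  assumes "permutation f" "y \<in> orbit f x" shows "orbit f y = orbit f x"
proof -
  have "x \<in> orbit f y" using orbit_swap[OF permutation_self_in_orbit[OF assms(1)] assms(2)] .
  then show ?thesis using assms(2) by (auto intro: orbit_trans)
qed

lemma card_orbit_permutation:
  assumes "permutation f" shows "card (orbit f x) = least_power f x"
proof -
  have "orbit f x = set (support f x)"
    using orbit_altdef_permutation[OF assms] support_set[OF assms] by auto
  then show ?thesis using distinct_card[OF cycle_of_permutation[OF assms]] by simp
qed

lemma funpow_comp_eq_funpow:
  fixes \<rho> \<sigma> :: "'a \<Rightarrow> 'a"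
  shows "\<forall>j. 0 < j \<and> j \<le> t \<longrightarrow> \<rho> ((\<sigma> ^^ j) x) = (\<sigma> ^^ j) x \<Longrightarrow> ((\<rho> \<circ> \<sigma>) ^^ t) x = (\<sigma> ^^ t) x"
proof (induction t)
  case (Suc t)
  have IH: "((\<rho> \<circ> \<sigma>) ^^ t) x = (\<sigma> ^^ t) x" using Suc.prems by (intro Suc.IH) auto
  have "((\<rho> \<circ> \<sigma>) ^^ Suc t) x = \<rho> (\<sigma> (((\<rho> \<circ> \<sigma>) ^^ t) x))" by simp
  also have "\<dots> = \<rho> ((\<sigma> ^^ Suc t) x)" by (simp only: IH funpow.simps comp_apply)
  also have "\<dots> = (\<sigma> ^^ Suc t) x" using Suc.prems by blast
  finally show ?case .
qed simp

lemma cyclic_permutation_exists: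
  assumes "finite C" "c \<in> C"
  obtains \<kappa> where "\<kappa> permutes C" "\<forall>y\<in>C. \<exists>i. (\<kappa> ^^ i) c = y"
proof -
  obtain xs where xs: "set xs = C" "distinct xs" using finite_distinct_list[OF assms(1)] by blast
  define cs where "cs = c # remove1 c xs"
  have cs: "set cs = C" "distinct cs" using xs assms(2) by (auto simp: cs_def)
  have "(cycle_of_list cs ^^ i) c = cs ! i" if "i < length cs" for i
  proof -
    have "(cycle_of_list cs ^^ i) c = hd (map (cycle_of_list cs ^^ i) cs)" by (simp add: cs_def)
    also have "\<dots> = hd (rotate i cs)" by (simp only: cyclic_rotation[OF cs(2)])
    also have "\<dots> = cs ! i" using that by (simp add: hd_rotate_conv_nth cs_def)
    finally show ?thesis .
  qed
  then have "\<forall>y\<in>C. \<exists>i. (cycle_of_list cs ^^ i) c = y"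
    using cs(1) in_set_conv_nth[of _ cs] by metis
  moreover have "cycle_of_list cs permutes C" using cycle_permutes[of cs] cs(1) by simp
  ultimately show ?thesis using that by blast
qed

lemma cycle_subset_orbit:
  assumes "permutation g" "\<forall>y\<in>C. (g ^^ s) y = \<kappa> y" "\<kappa> permutes C" "x \<in> C"
    "\<forall>y\<in>C. \<exists>i. (\<kappa> ^^ i) x = y"
  shows "C \<subseteq> orbit g x"
proof
  have pow: "(g ^^ (s * i)) x = (\<kappa> ^^ i) x \<and> (\<kappa> ^^ i) x \<in> C" for i
  proof (induction i)
    case (Suc i)
    have "(g ^^ (s * Suc i)) x = (g ^^ s) ((g ^^ (s * i)) x)" by (simp add: funpow_add)
    also have "\<dots> = \<kappa> ((\<kappa> ^^ i) x)" using Suc assms(2) by simp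
    finally show ?case using Suc permutes_in_image[OF assms(3)] by simp
  qed (use assms(4) in simp)
  fix y assume "y \<in> C"
  then obtain i where "(\<kappa> ^^ i) x = y" using assms(5) by blast
  then have "y \<in> {(g ^^ n) x | n. True}" using pow[of i] by (auto intro!: exI[of _ "s * i"])
  then show "y \<in> orbit g x" by (simp only: orbit_altdef_permutation[OF assms(1)])
qed

definition walk :: "('a \<Rightarrow> 'a \<Rightarrow> bool) \<Rightarrow> (nat \<Rightarrow> 'a) \<Rightarrow> nat \<Rightarrow> bool" where
  "walk E P n \<longleftrightarrow> (\<forall>i<n. E (P i) (P (Suc i)))"

lemma walk_prefix: "walk E P n \<Longrightarrow> i \<le> n \<Longrightarrow> walk E P i"
  unfolding walk_def by auto

lemma walk_last_edge: assumes "walk E P n" "0 < n" shows "E (P (n - 1)) (P n)"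
proof -
  have "E (P (n - 1)) (P (Suc (n - 1)))" using assms unfolding walk_def by (meson diff_less zero_less_one)
  then show ?thesis using assms(2) by simp
qed

lemma walk_snoc: "walk E P n \<Longrightarrow> E (P n) y \<Longrightarrow> walk E (P(Suc n := y)) (Suc n)"
  unfolding walk_def by (auto simp: less_Suc_eq)

lemma walk_successively: "walk E P n \<Longrightarrow> successively E (map P [m..<n])"
  unfolding successively_map successively_conv_nth walk_def by auto

lemma walk_splice:
  assumes Q: "walk E Q k" and P: "walk E P n" "i \<le> n" and meet: "Q k = P i"
  shows "walk E (\<lambda>j. if j \<le> k then Q j else P (j - k + i)) (k + (n - i))"
  unfolding walk_def
proof (intro allI impI)
  fix j assume j: "j < k + (n - i)"
  consider "Suc j \<le> k" | "j = k" | "k < j" by linarith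
  then show "E (if j \<le> k then Q j else P (j - k + i)) (if Suc j \<le> k then Q (Suc j) else P (Suc j - k + i))"
  proof cases
    case 1 then show ?thesis using Q unfolding walk_def by simp
  next
    case 2 then show ?thesis using P meet j unfolding walk_def by simp
  next
    case 3
    then have "j - k + i < n" "Suc j - k + i = Suc (j - k + i)" using j P(2) by linarith+
    then show ?thesis using P(1) 3 unfolding walk_def by simp
  qed
qed

lemma last_agreement:
  fixes a :: nat
  assumes "P 0 = Q 0" "P a \<noteq> Q a"
  obtains j where "j < a" "P j = Q j" "\<forall>i. j < i \<and> i \<le> a \<longrightarrow> P i \<noteq> Q i"
proof -
  define J where "J = {j. j \<le> a \<and> P j = Q j}"
  have "finite J" unfolding J_def by (rule finite_subset[of _ "{..a}"]) auto
  moreover have "0 \<in> J" unfolding J_def using assms(1) by simp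
  ultimately have "Max J \<in> J" "\<forall>i\<in>J. i \<le> Max J" by (auto intro: Max_in)
  then show ?thesis using that assms(2) unfolding J_def by (metis (mono_tags) le_less mem_Collect_eq not_le)
qed

lemma walks_close_up:
  assumes sym: "\<And>x y. E x y \<Longrightarrow> E y x" and P: "walk E P a" and Q: "walk E Q a"
    and j: "j < a" "P j = Q j" and ys: "successively E (P a # ys @ [Q a])"
  defines "vs \<equiv> map P [j..<a] @ (P a # ys @ [Q a]) @ rev (map Q [Suc j..<a])"
  shows "successively E vs" "E (last vs) (hd vs)" "3 \<le> length vs"
proof -
  have up: "successively E (map P [j..<a])" using walk_successively[OF P] .
  have "successively (\<lambda>x y. E y x) (map Q [Suc j..<a])"
    by (rule successively_mono[OF walk_successively[OF Q]]) (use sym in blast)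
  then have down: "successively E (rev (map Q [Suc j..<a]))" by simp
  have "E (P (a - 1)) (P a)" using walk_last_edge P j by auto
  moreover have "last (map P [j..<a]) = P (a - 1)" using j by (simp add: last_map)
  moreover have "E (Q a) (hd (rev (map Q [Suc j..<a])))" if "Suc j < a"
    using walk_last_edge[OF Q] sym that by (simp add: hd_rev last_map)
  ultimately show "successively E vs"
    unfolding vs_def successively_append_iff using up down ys j sym
    by (auto simp del: upt_Suc) (meson not_less)
  have "hd vs = Q j" unfolding vs_def using j by (simp add: upt_conv_Cons)
  moreover have "last vs = Q (Suc j)"
  proof (cases "Suc j < a")
    case False then have "a = Suc j" using j by simp
    then show ?thesis by (simp add: vs_def)
  qed (simp add: vs_def last_rev upt_conv_Cons)
  moreover have "E (Q j) (Q (Suc j))" using Q j unfolding walk_def by blast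
  ultimately show "E (last vs) (hd vs)" using sym by simp
  show "3 \<le> length vs" unfolding vs_def using j by simp
qed

section \<open>Depth and parents in a rooted tree\<close>

locale rooted_tree =
  fixes V :: "'a set" and E :: "'a \<Rightarrow> 'a \<Rightarrow> bool" and r :: 'a
  assumes tree: "finite_rooted_tree V E r"
begin

lemma finite_V: "finite V" and root_in_V: "r \<in> V" and simple: "simple_graph V E"
  and connected: "connected_graph V E" and acyclic: "acyclic_graph E"
  using tree unfolding finite_rooted_tree_def by auto

lemma edge_sym: "E x y \<Longrightarrow> E y x" and edge_in_V: "E x y \<Longrightarrow> x \<in> V" "E x y \<Longrightarrow> y \<in> V"
  and edge_irrefl: "\<not> E x x"
  using simple unfolding simple_graph_def by blast+

definition depth :: "'a \<Rightarrow> nat" where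
  "depth x = (LEAST n. \<exists>P. P 0 = r \<and> P n = x \<and> walk E P n)"

lemma walk_from_root: assumes "x \<in> V" shows "\<exists>n P. P 0 = r \<and> P n = x \<and> walk E P n"
proof -
  have "E\<^sup>*\<^sup>* r x" using connected assms root_in_V unfolding connected_graph_def by blast
  then show ?thesis
  proof (induction rule: rtranclp_induct)
    case base
    show ?case by (rule exI[of _ 0], rule exI[of _ "\<lambda>_. r"]) (simp add: walk_def)
  next
    case (step y z)
    then obtain n P where P: "P 0 = r" "P n = y" "walk E P n" by blast
    have "walk E (P(Suc n := z)) (Suc n)" by (rule walk_snoc) (use P step in auto)
    moreover have "(P(Suc n := z)) 0 = r" "(P(Suc n := z)) (Suc n) = z" using P by auto
    ultimately show ?case by blast
  qed
qed

lemma depth_walk: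
  assumes "x \<in> V" obtains P where "P 0 = r" "P (depth x) = x" "walk E P (depth x)"
proof -
  have "\<exists>P. P 0 = r \<and> P (depth x) = x \<and> walk E P (depth x)"
    unfolding depth_def by (rule LeastI_ex) (use walk_from_root[OF assms] in blast)
  then show ?thesis using that by blast
qed

lemma depth_le_walk: "P 0 = r \<Longrightarrow> P n = x \<Longrightarrow> walk E P n \<Longrightarrow> depth x \<le> n"
  unfolding depth_def by (rule Least_le) blast

lemma depth_root [simp]: "depth r = 0"
  using depth_le_walk[of "\<lambda>_. r" 0 r] by (simp add: walk_def)

definition geodesic :: "(nat \<Rightarrow> 'a) \<Rightarrow> nat \<Rightarrow> bool" where
  "geodesic P n \<longleftrightarrow> P 0 = r \<and> walk E P n \<and> (\<forall>i\<le>n. depth (P i) = i)"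

lemma geodesicD:
  assumes "geodesic P n" shows "P 0 = r" "walk E P n" "i \<le> n \<Longrightarrow> depth (P i) = i"
  using assms unfolding geodesic_def by auto

lemma geodesic_exists:
  assumes "x \<in> V" obtains P where "geodesic P (depth x)" "P (depth x) = x"
proof -
  obtain P where P: "P 0 = r" "P (depth x) = x" "walk E P (depth x)"
    using depth_walk[OF assms] .
  have "depth (P i) = i" if i: "i \<le> depth x" for i
  proof (rule antisym)
    show "depth (P i) \<le> i" using depth_le_walk[OF P(1) refl walk_prefix[OF P(3) i]] .
    have "P i \<in> V"
      using i P walk_last_edge[OF walk_prefix[OF P(3) i]] edge_in_V(2) root_in_V
      by (cases "i = 0") auto
    then obtain Q where Q: "Q 0 = r" "Q (depth (P i)) = P i" "walk E Q (depth (P i))"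
      by (rule depth_walk)
    \<comment> \<open>a shorter walk to \<open>P i\<close> followed by the rest of \<open>P\<close> would reach \<open>x\<close> too early\<close>
    let ?R = "\<lambda>j. if j \<le> depth (P i) then Q j else P (j - depth (P i) + i)"
    have "?R 0 = r" using Q(1) by simp
    moreover have "?R (depth (P i) + (depth x - i)) = x"
    proof (cases "i = depth x")
      case False then have "\<not> depth (P i) + (depth x - i) \<le> depth (P i)" using i by linarith
      then show ?thesis using P(2) i by simp
    qed (use Q(2) P(2) in simp)
    moreover have "walk E ?R (depth (P i) + (depth x - i))" by (rule walk_splice[OF Q(3) P(3) i Q(2)])
    ultimately have "depth x \<le> depth (P i) + (depth x - i)" by (rule depth_le_walk)
    then show "i \<le> depth (P i)" using i by linarith
  qed
  then show ?thesis using that P unfolding geodesic_def by blast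
qed

text \<open>Otherwise, the path up along \<open>P\<close> from the last vertex shared with \<open>Q\<close>, across \<open>ys\<close>
  and back down along \<open>Q\<close> would close a cycle.\<close>
lemma geodesics_not_joined:
  assumes P: "geodesic P a" and Q: "geodesic Q a" and ne: "P a \<noteq> Q a"
    and ys: "distinct ys" "\<forall>y\<in>set ys. a < depth y" "successively E (P a # ys @ [Q a])"
  shows False
proof -
  have Pd: "\<forall>i\<le>a. depth (P i) = i" and Qd: "\<forall>i\<le>a. depth (Q i) = i"
    using geodesicD(3)[OF P] geodesicD(3)[OF Q] by auto
  obtain j where ja: "j < a" and Pj: "P j = Q j" and apart: "\<forall>i. j < i \<and> i \<le> a \<longrightarrow> P i \<noteq> Q i"
    using last_agreement[of P Q a] geodesicD(1)[OF P] geodesicD(1)[OF Q] ne by metis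
  define vs where "vs = map P [j..<a] @ (P a # ys @ [Q a]) @ rev (map Q [Suc j..<a])"
  have "distinct vs"
  proof -
    have "distinct (map P [j..<a])" "distinct (map Q [Suc j..<a])"
      using Pd Qd by (auto simp: distinct_map inj_on_def) (metis less_imp_le_nat)+
    moreover have "\<forall>x\<in>set (map P [j..<a]). depth x < a" "\<forall>x\<in>set (map Q [Suc j..<a]). depth x < a"
      using Pd Qd by auto
    moreover have "set (map P [j..<a]) \<inter> set (map Q [Suc j..<a]) = {}"
    proof (rule ccontr)
      assume "\<not> ?thesis"
      then obtain i i' where ii: "j \<le> i" "i < a" "Suc j \<le> i'" "i' < a" "P i = Q i'" by auto
      then have "i = i'" using Pd Qd by (metis less_imp_le_nat)
      then show False using apart ii by auto
    qed
    moreover have "depth (P a) = a" "depth (Q a) = a" using Pd Qd by auto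
    ultimately show ?thesis unfolding vs_def using ys(1,2) ne
      by (auto simp del: upt_Suc) (meson atLeastLessThan_iff less_asym)+
  qed
  then have "is_cycle E vs"
    using walks_close_up[OF _ geodesicD(2)[OF P] geodesicD(2)[OF Q] ja Pj ys(3)] edge_sym
    unfolding is_cycle_def vs_def successively_conv_nth by blast
  then show False using acyclic unfolding acyclic_graph_def by blast
qed

lemma depth_edge_le: assumes "E x y" shows "depth y \<le> Suc (depth x)"
proof -
  obtain P where P: "P 0 = r" "P (depth x) = x" "walk E P (depth x)"
    using depth_walk edge_in_V(1)[OF assms] by blast
  have "(P(Suc (depth x) := y)) 0 = r" "(P(Suc (depth x) := y)) (Suc (depth x)) = y"
    using P(1) by simp_all
  moreover have "walk E (P(Suc (depth x) := y)) (Suc (depth x))"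
    using walk_snoc[OF P(3)] P(2) assms by simp
  ultimately show ?thesis by (rule depth_le_walk)
qed

lemma depth_edge_neq: assumes "E x y" shows "depth x \<noteq> depth y"
proof
  assume eq: "depth x = depth y"
  obtain P where P: "geodesic P (depth x)" "P (depth x) = x"
    using geodesic_exists edge_in_V(1)[OF assms] by blast
  obtain Q where Q: "geodesic Q (depth x)" "Q (depth x) = y"
    using geodesic_exists[OF edge_in_V(2)[OF assms]] eq by metis
  show False
    by (rule geodesics_not_joined[OF P(1) Q(1), of "[]"]) (use P Q assms edge_irrefl in auto)
qed

lemma exists_parent: assumes "x \<in> V" "x \<noteq> r" shows "\<exists>y. E x y \<and> Suc (depth y) = depth x"
proof -
  obtain P where P: "geodesic P (depth x)" "P (depth x) = x"
    using geodesic_exists assms(1) by blast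
  have "depth x \<noteq> 0" using P geodesicD(1)[OF P(1)] assms(2) by (metis)
  then have "E (P (depth x - 1)) x"
    using walk_last_edge[OF geodesicD(2)[OF P(1)]] P(2) by simp
  moreover have "Suc (depth (P (depth x - 1))) = depth x"
    using geodesicD(3)[OF P(1), of "depth x - 1"] \<open>depth x \<noteq> 0\<close> by simp
  ultimately show ?thesis using edge_sym by blast
qed

lemma parent_unique:
  assumes "E x y1" "E x y2" "Suc (depth y1) = depth x" "Suc (depth y2) = depth x"
  shows "y1 = y2"
proof (rule ccontr)
  assume ne: "y1 \<noteq> y2"
  obtain P where P: "geodesic P (depth y1)" "P (depth y1) = y1"
    using geodesic_exists edge_in_V(2)[OF assms(1)] by blast
  obtain Q where Q: "geodesic Q (depth y1)" "Q (depth y1) = y2"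
    using geodesic_exists[OF edge_in_V(2)[OF assms(2)]] assms(3,4) by (metis Suc_inject)
  show False
    by (rule geodesics_not_joined[OF P(1) Q(1), of "[x]"]) (use P Q assms ne edge_sym in auto)
qed

text \<open>For the root the choice is unconstrained.\<close>
definition parent :: "'a \<Rightarrow> 'a" where
  "parent x = (SOME y. E x y \<and> Suc (depth y) = depth x)"

lemma
  assumes "x \<in> V" "x \<noteq> r"
  shows edge_parent: "E x (parent x)" and depth_parent: "Suc (depth (parent x)) = depth x"
    and parent_in_V: "parent x \<in> V"
proof -
  have "E x (parent x) \<and> Suc (depth (parent x)) = depth x"
    unfolding parent_def using exists_parent[OF assms] by (rule someI_ex)
  then show "E x (parent x)" "Suc (depth (parent x)) = depth x" "parent x \<in> V"
    using edge_in_V by auto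
qed

lemma edge_iff_parent:
  "E x y \<longleftrightarrow> x \<in> V \<and> y \<in> V \<and> (x \<noteq> r \<and> parent x = y \<or> y \<noteq> r \<and> parent y = x)"
proof
  assume e: "E x y"
  have "depth y \<le> Suc (depth x)" "depth x \<le> Suc (depth y)" "depth x \<noteq> depth y"
    using depth_edge_le e edge_sym depth_edge_neq by blast+
  then consider "Suc (depth y) = depth x" | "Suc (depth x) = depth y" by linarith
  then show "x \<in> V \<and> y \<in> V \<and> (x \<noteq> r \<and> parent x = y \<or> y \<noteq> r \<and> parent y = x)"
  proof cases
    case 1
    then have "x \<noteq> r" by auto
    then show ?thesis
      using parent_unique[OF edge_parent e depth_parent 1] edge_in_V e by auto
  next
    case 2
    then have "y \<noteq> r" by auto
    then show ?thesis
      using parent_unique[OF edge_parent edge_sym[OF e] depth_parent 2] edge_in_V e by auto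
  qed
qed (use edge_parent edge_sym in blast)

definition ancestor :: "nat \<Rightarrow> 'a \<Rightarrow> 'a" where
  "ancestor k x = (parent ^^ (depth x - k)) x"

definition subtree :: "'a \<Rightarrow> 'a set" where
  "subtree v = {x \<in> V. depth v \<le> depth x \<and> ancestor (depth v) x = v}"

lemma funpow_parent:
  "x \<in> V \<Longrightarrow> k \<le> depth x \<Longrightarrow> (parent ^^ k) x \<in> V \<and> depth ((parent ^^ k) x) = depth x - k"
proof (induction k)
  case (Suc k)
  then have "(parent ^^ k) x \<in> V" "depth ((parent ^^ k) x) = depth x - k" "(parent ^^ k) x \<noteq> r"
    by auto
  then show ?case using parent_in_V depth_parent by fastforce
qed simp

lemma ancestor_in_V: "x \<in> V \<Longrightarrow> k \<le> depth x \<Longrightarrow> ancestor k x \<in> V"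
  using funpow_parent[of x "depth x - k"] unfolding ancestor_def by auto

lemma ancestor_depth [simp]: "ancestor (depth x) x = x"
  unfolding ancestor_def by simp

lemma subtree_subset_V: "subtree v \<subseteq> V"
  unfolding subtree_def by blast

lemma subtree_root_in_V: "x \<in> subtree v \<Longrightarrow> v \<in> V"
  unfolding subtree_def using ancestor_in_V by (metis (mono_tags, lifting) mem_Collect_eq)

lemma self_in_subtree: "x \<in> V \<Longrightarrow> x \<in> subtree x"
  unfolding subtree_def by simp

lemma depth_le_in_subtree: "x \<in> subtree v \<Longrightarrow> depth v \<le> depth x"
  unfolding subtree_def by simp

lemma in_subtree_depth_eq: "x \<in> subtree v \<Longrightarrow> depth x = depth v \<Longrightarrow> x = v"
  unfolding subtree_def by (auto simp: ancestor_def)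

lemma subtree_root_unique: "x \<in> subtree v \<Longrightarrow> x \<in> subtree w \<Longrightarrow> depth v = depth w \<Longrightarrow> v = w"
  unfolding subtree_def by auto

lemma parent_in_subtree:
  assumes "x \<in> subtree v" "x \<noteq> v" shows "x \<noteq> r" "parent x \<in> subtree v"
proof -
  have x: "x \<in> V" and lt: "depth v < depth x"
    using assms in_subtree_depth_eq depth_le_in_subtree subtree_subset_V by fastforce+
  then show "x \<noteq> r" by auto
  then have "parent x \<in> V" "Suc (depth (parent x)) = depth x" using x parent_in_V depth_parent by auto
  moreover have "depth x - depth v = Suc (depth (parent x) - depth v)" using calculation lt by simp
  then have "ancestor (depth v) (parent x) = ancestor (depth v) x"
    by (simp only: ancestor_def funpow_Suc_right comp_apply)
  ultimately show "parent x \<in> subtree v" using assms(1) lt unfolding subtree_def by auto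
qed

lemma in_subtree_if_parent_in:
  assumes "x \<in> V" "x \<noteq> r" "parent x \<in> subtree v" shows "x \<in> subtree v"
proof -
  have p: "parent x \<in> V" "Suc (depth (parent x)) = depth x" using assms parent_in_V depth_parent by auto
  have le: "depth v \<le> depth (parent x)" using assms(3) depth_le_in_subtree by blast
  have "depth x - depth v = Suc (depth (parent x) - depth v)" using p le by simp
  then have "ancestor (depth v) x = ancestor (depth v) (parent x)"
    by (simp only: ancestor_def funpow_Suc_right comp_apply)
  then show ?thesis using assms p le unfolding subtree_def by auto
qed

lemma subtree_root_in_parent_closed:
  assumes closed: "\<forall>x\<in>D. x \<noteq> r \<longrightarrow> parent x \<in> D"
  shows "x \<in> subtree v \<Longrightarrow> x \<in> D \<Longrightarrow> v \<in> D"
proof (induction "depth x" arbitrary: x rule: less_induct)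
  case less
  show ?case
  proof (cases "x = v")
    case False
    then have "x \<noteq> r" "parent x \<in> subtree v" using parent_in_subtree less(2) by auto
    moreover have "depth (parent x) < depth x"
      using depth_parent calculation(1) less(2) subtree_subset_V by fastforce
    ultimately show ?thesis using less closed by blast
  qed (use less in simp)
qed

text \<open>A deepest vertex of the subtree has no children.\<close>
lemma subtree_contains_leaf:
  assumes "v \<in> V" obtains l where "l \<in> tree_leaves V E r" "l \<in> subtree v"
proof -
  have fin: "finite (subtree v)" using finite_V subtree_subset_V by (rule finite_subset[rotated])
  define m where "m = Max (depth ` subtree v)"
  have "m \<in> depth ` subtree v" unfolding m_def using fin self_in_subtree[OF assms] by (intro Max_in) auto
  moreover have "\<forall>y\<in>subtree v. depth y \<le> m" unfolding m_def using fin by auto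
  ultimately obtain l where l: "l \<in> subtree v" "\<forall>y\<in>subtree v. depth y \<le> depth l" by auto
  have lV: "l \<in> V" using l(1) subtree_subset_V by blast
  have no_child: "\<not> (z \<in> V \<and> z \<noteq> r \<and> parent z = l)" for z
  proof
    assume z: "z \<in> V \<and> z \<noteq> r \<and> parent z = l"
    then have "z \<in> subtree v" using in_subtree_if_parent_in l(1) by auto
    moreover have "depth z = Suc (depth l)" using depth_parent z by fastforce
    ultimately show False using l(2) by fastforce
  qed
  have "l \<in> tree_leaves V E r"
  proof (cases "l = r")
    case True
    then have "{w. E l w} = {}" using no_child edge_iff_parent by auto
    then show ?thesis unfolding tree_leaves_def using lV True by simp
  next
    case False
    then have "{w. E l w} = {parent l}" using no_child edge_iff_parent lV parent_in_V by auto
    then show ?thesis unfolding tree_leaves_def using lV False by simp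
  qed
  then show ?thesis using that l(1) by blast
qed

lemma ancestor_of_child_subtree:
  assumes "parent y = v" "y \<noteq> r" "x \<in> subtree y" shows "ancestor (Suc (depth v)) x = y"
proof -
  have "y \<in> V" using assms(3) subtree_root_in_V by blast
  then have "depth y = Suc (depth v)" using assms(1,2) depth_parent[of y] by simp
  then show ?thesis using assms(3) unfolding subtree_def by simp
qed

end

section \<open>Automorphisms of a coloured rooted tree\<close>

locale coloured_rooted_tree = rooted_tree V E r for V :: "'a set" and E r +
  fixes c :: "'a \<Rightarrow> 'c"
begin

abbreviation Aut :: "('a \<Rightarrow> 'a) set" where
  "Aut \<equiv> rtree_aut V E c r"

lemma AutD:
  assumes "\<sigma> \<in> Aut"
  shows "bij_betw \<sigma> V V" "\<sigma> r = r" "x \<in> V \<Longrightarrow> c (\<sigma> x) = c x"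
    "x \<in> V \<Longrightarrow> y \<in> V \<Longrightarrow> E (\<sigma> x) (\<sigma> y) \<longleftrightarrow> E x y"
  using assms unfolding rtree_aut_def graph_aut_def by auto

lemma Aut_in_V: "\<sigma> \<in> Aut \<Longrightarrow> x \<in> V \<Longrightarrow> \<sigma> x \<in> V"
  using AutD(1) bij_betwE by blast

lemma Aut_inj_iff: "\<sigma> \<in> Aut \<Longrightarrow> x \<in> V \<Longrightarrow> y \<in> V \<Longrightarrow> \<sigma> x = \<sigma> y \<longleftrightarrow> x = y"
  using AutD(1) unfolding bij_betw_def inj_on_def by blast

lemma Aut_neq_root: "\<sigma> \<in> Aut \<Longrightarrow> x \<in> V \<Longrightarrow> x \<noteq> r \<Longrightarrow> \<sigma> x \<noteq> r"
  using Aut_inj_iff AutD(2) root_in_V by metis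

lemma Aut_inv: assumes "\<sigma> \<in> Aut" shows "inv_into V \<sigma> \<in> Aut"
proof -
  let ?\<tau> = "inv_into V \<sigma>"
  have bij: "bij_betw ?\<tau> V V" using AutD(1)[OF assms] by (rule bij_betw_inv_into)
  have \<sigma>\<tau>: "\<sigma> (?\<tau> x) = x" if "x \<in> V" for x
    using AutD(1)[OF assms] that by (meson bij_betw_inv_into_right)
  have \<tau>V: "?\<tau> x \<in> V" if "x \<in> V" for x using bij that bij_betwE by blast
  have "?\<tau> r = r" using AutD(1,2)[OF assms] root_in_V by (metis bij_betw_inv_into_left)
  moreover have "c (?\<tau> x) = c x" if "x \<in> V" for x
    using AutD(3)[OF assms \<tau>V[OF that]] \<sigma>\<tau>[OF that] by simp
  moreover have "E (?\<tau> x) (?\<tau> y) \<longleftrightarrow> E x y" if "x \<in> V" "y \<in> V" for x y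
    using AutD(4)[OF assms \<tau>V[OF that(1)] \<tau>V[OF that(2)]] \<sigma>\<tau> that by simp
  ultimately show ?thesis using bij unfolding rtree_aut_def graph_aut_def by auto
qed

lemma Aut_depth_le: assumes "\<sigma> \<in> Aut" "x \<in> V" shows "depth (\<sigma> x) \<le> depth x"
proof -
  obtain P where P: "P 0 = r" "P (depth x) = x" "walk E P (depth x)"
    using depth_walk[OF assms(2)] .
  have "walk E (\<sigma> \<circ> P) (depth x)"
    using P(3) AutD(4)[OF assms(1)] edge_in_V unfolding walk_def by auto
  then show ?thesis using depth_le_walk[of "\<sigma> \<circ> P" "depth x" "\<sigma> x"] P(1,2) AutD(2)[OF assms(1)] by simp
qed

lemma Aut_depth: assumes "\<sigma> \<in> Aut" "x \<in> V" shows "depth (\<sigma> x) = depth x"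
proof (rule antisym)
  have "inv_into V \<sigma> (\<sigma> x) = x" using AutD(1)[OF assms(1)] assms(2) by (meson bij_betw_inv_into_left)
  then show "depth x \<le> depth (\<sigma> x)"
    using Aut_depth_le[OF Aut_inv[OF assms(1)] Aut_in_V[OF assms]] by simp
qed (rule Aut_depth_le[OF assms])

lemma Aut_parent: assumes "\<sigma> \<in> Aut" "x \<in> V" "x \<noteq> r" shows "parent (\<sigma> x) = \<sigma> (parent x)"
proof -
  have "E (\<sigma> x) (\<sigma> (parent x))"
    using edge_parent parent_in_V AutD(4)[OF assms(1)] assms by auto
  moreover have "Suc (depth (\<sigma> (parent x))) = depth (\<sigma> x)"
    using depth_parent parent_in_V Aut_depth assms by auto
  ultimately show ?thesis
    using parent_unique edge_parent depth_parent Aut_in_V Aut_neq_root assms by metis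
qed

lemma AutI_parent:
  assumes bij: "bij_betw \<sigma> V V" and root: "\<sigma> r = r" and colour: "\<forall>x\<in>V. c (\<sigma> x) = c x"
    and parent: "\<forall>x\<in>V. x \<noteq> r \<longrightarrow> parent (\<sigma> x) = \<sigma> (parent x)"
  shows "\<sigma> \<in> Aut"
proof -
  have \<sigma>V: "\<sigma> x \<in> V" if "x \<in> V" for x using bij that bij_betwE by blast
  have inj: "\<sigma> x = \<sigma> y \<longleftrightarrow> x = y" if "x \<in> V" "y \<in> V" for x y
    using bij that unfolding bij_betw_def inj_on_def by blast
  have "E (\<sigma> x) (\<sigma> y) \<longleftrightarrow> E x y" if xy: "x \<in> V" "y \<in> V" for x y
  proof -
    have "\<sigma> x = r \<longleftrightarrow> x = r" "\<sigma> y = r \<longleftrightarrow> y = r" using inj root root_in_V xy by metis+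
    moreover have "x \<noteq> r \<Longrightarrow> parent (\<sigma> x) = \<sigma> y \<longleftrightarrow> parent x = y"
      "y \<noteq> r \<Longrightarrow> parent (\<sigma> y) = \<sigma> x \<longleftrightarrow> parent y = x"
      using parent inj parent_in_V xy by metis+
    ultimately show ?thesis
      unfolding edge_iff_parent[of "\<sigma> x"] edge_iff_parent[of x] using xy \<sigma>V by auto
  qed
  then show ?thesis using bij root colour unfolding rtree_aut_def graph_aut_def by auto
qed

lemma Aut_comp: assumes "\<sigma> \<in> Aut" "\<tau> \<in> Aut" shows "\<sigma> \<circ> \<tau> \<in> Aut"
proof (rule AutI_parent)
  show "bij_betw (\<sigma> \<circ> \<tau>) V V" using AutD(1) assms bij_betw_trans by blast
  show "(\<sigma> \<circ> \<tau>) r = r" using AutD(2)[OF assms(1)] AutD(2)[OF assms(2)] by simp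
  show "\<forall>x\<in>V. c ((\<sigma> \<circ> \<tau>) x) = c x" using AutD(3) assms Aut_in_V by simp
  show "\<forall>x\<in>V. x \<noteq> r \<longrightarrow> parent ((\<sigma> \<circ> \<tau>) x) = (\<sigma> \<circ> \<tau>) (parent x)"
    using Aut_parent Aut_in_V Aut_neq_root assms by simp
qed

lemma Aut_id: "id \<in> Aut"
  by (rule AutI_parent) (simp_all add: bij_betw_id)

lemma Aut_funpow: "\<sigma> \<in> Aut \<Longrightarrow> \<sigma> ^^ n \<in> Aut"
  by (induction n) (simp_all add: Aut_id Aut_comp)

lemma Aut_ancestor:
  assumes "\<sigma> \<in> Aut" "x \<in> V" "k \<le> depth x" shows "\<sigma> (ancestor k x) = ancestor k (\<sigma> x)"
proof -
  have "\<sigma> ((parent ^^ i) x) = (parent ^^ i) (\<sigma> x)" if "i \<le> depth x" for i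
    using that
  proof (induction i)
    case (Suc i)
    then have "(parent ^^ i) x \<in> V" "(parent ^^ i) x \<noteq> r"
      using funpow_parent[OF assms(2), of i] by auto
    then have "\<sigma> (parent ((parent ^^ i) x)) = parent (\<sigma> ((parent ^^ i) x))"
      using Aut_parent[OF assms(1)] by simp
    then show ?case using Suc by simp
  qed simp
  then show ?thesis unfolding ancestor_def using Aut_depth[OF assms(1,2)] by simp
qed

lemma Aut_subtree: assumes "\<sigma> \<in> Aut" "x \<in> subtree v" shows "\<sigma> x \<in> subtree (\<sigma> v)"
proof -
  have "x \<in> V" "v \<in> V" using assms(2) subtree_subset_V subtree_root_in_V by auto
  then show ?thesis
    using assms Aut_depth Aut_in_V Aut_ancestor unfolding subtree_def by auto
qed

lemma Aut_fixes_ancestors: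
  assumes "\<sigma> \<in> Aut" "l \<in> subtree x" "\<sigma> l = l" shows "\<sigma> x = x"
  using Aut_ancestor[OF assms(1), of l "depth x"] assms(2,3) subtree_subset_V
  unfolding subtree_def by auto

lemma orbit_of_Aut_subset_V: "x \<in> V \<Longrightarrow> orbit_of Aut x \<subseteq> V"
  unfolding orbit_of_def using Aut_in_V by blast

lemma self_in_orbit_of_Aut: "x \<in> orbit_of Aut x"
  unfolding orbit_of_def using Aut_id by (metis id_apply image_eqI)

lemma orbit_of_Aut_eq:
  assumes "x \<in> V" "y \<in> orbit_of Aut x" shows "orbit_of Aut y = orbit_of Aut x"
proof -
  obtain \<tau> where \<tau>: "\<tau> \<in> Aut" "y = \<tau> x" using assms(2) unfolding orbit_of_def by blast
  have "inv_into V \<tau> y = x" using AutD(1)[OF \<tau>(1)] assms(1) \<tau>(2) by (simp add: bij_betw_inv_into_left)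
  then have "x \<in> orbit_of Aut y" using Aut_inv[OF \<tau>(1)] unfolding orbit_of_def by blast
  have "orbit_of Aut z \<subseteq> orbit_of Aut w" if z: "z \<in> orbit_of Aut w" for z w
  proof
    fix u assume "u \<in> orbit_of Aut z"
    then obtain \<tau>1 \<tau>2 where "\<tau>1 \<in> Aut" "u = \<tau>1 z" "\<tau>2 \<in> Aut" "z = \<tau>2 w"
      using z unfolding orbit_of_def by blast
    then show "u \<in> orbit_of Aut w" using Aut_comp unfolding orbit_of_def by (metis comp_apply image_eqI)
  qed
  then show ?thesis using assms(2) \<open>x \<in> orbit_of Aut y\<close> by blast
qed

lemma orbit_subset_orbit_of_Aut: "\<sigma> \<in> Aut \<Longrightarrow> orbit \<sigma> x \<subseteq> orbit_of Aut x"
  unfolding orbit_altdef orbit_of_def using Aut_funpow by blast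

subsection \<open>Patching automorphisms below siblings\<close>

context
  fixes v :: 'a and C :: "'a set" and T :: "'a \<Rightarrow> 'a \<Rightarrow> 'a"
  assumes children: "\<forall>y\<in>C. y \<in> V \<and> y \<noteq> r \<and> parent y = v"
    and T_Aut: "\<forall>y\<in>C. T y \<in> Aut" and T_perm: "bij_betw (\<lambda>y. T y y) C C"
begin

text \<open>\<open>ancestor (Suc (depth v)) x\<close> is the child of \<open>v\<close> above \<open>x\<close>.\<close>
definition patch :: "'a \<Rightarrow> 'a" where
  "patch x = (if \<exists>y\<in>C. x \<in> subtree y then T (ancestor (Suc (depth v)) x) x else x)"

lemma patch_subtree:
  assumes "y \<in> C" "x \<in> subtree y" shows "patch x = T y x" "patch x \<in> subtree (T y y)" "T y y \<in> C"
proof -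
  show "patch x = T y x"
    using assms children ancestor_of_child_subtree unfolding patch_def by auto
  then show "patch x \<in> subtree (T y y)" using Aut_subtree T_Aut assms by simp
  show "T y y \<in> C" using T_perm assms(1) bij_betwE by fast
qed

lemma patch_outside: "\<forall>y\<in>C. x \<notin> subtree y \<Longrightarrow> patch x = x"
  unfolding patch_def by auto

lemma depth_in_children: "y \<in> C \<Longrightarrow> depth y = Suc (depth v)"
  using children depth_parent by fastforce

lemma patch_in_V: assumes "x \<in> V" shows "patch x \<in> V"
proof (cases "\<exists>y\<in>C. x \<in> subtree y")
  case True then show ?thesis using patch_subtree(2) subtree_subset_V by blast
qed (use assms patch_outside in auto)

lemma patch_in_subtrees_iff: "(\<exists>y\<in>C. patch x \<in> subtree y) \<longleftrightarrow> (\<exists>y\<in>C. x \<in> subtree y)"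
  using patch_subtree(2,3) patch_outside by metis

lemma inj_on_patch: "inj_on patch V"
proof (rule inj_onI)
  fix x x' assume xx': "x \<in> V" "x' \<in> V" "patch x = patch x'"
  show "x = x'"
  proof (cases "\<exists>y\<in>C. x \<in> subtree y")
    case True
    then obtain y y' where y: "y \<in> C" "x \<in> subtree y" and y': "y' \<in> C" "x' \<in> subtree y'"
      using patch_in_subtrees_iff xx'(3) by metis
    have "patch x \<in> subtree (T y y)" "patch x' \<in> subtree (T y' y')" "T y y \<in> C" "T y' y' \<in> C"
      using patch_subtree y y' by blast+
    then have "T y y = T y' y'" using xx'(3) subtree_root_unique depth_in_children by metis
    then have "y = y'" using T_perm y(1) y'(1) unfolding bij_betw_def inj_on_def by blast
    then show ?thesis using xx' y y' patch_subtree(1) T_Aut Aut_inj_iff by metis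
  next
    case False
    then have "\<forall>y\<in>C. x' \<notin> subtree y" using patch_in_subtrees_iff xx'(3) by metis
    then show ?thesis using False xx'(3) patch_outside by auto
  qed
qed

lemma patch_permutes: "patch permutes V"
proof (rule bij_imp_permutes)
  show "bij_betw patch V V"
    using inj_on_patch endo_inj_surj[OF finite_V _ inj_on_patch] patch_in_V
    unfolding bij_betw_def by blast
  show "x \<notin> V \<Longrightarrow> patch x = x" for x
    using patch_outside subtree_subset_V by blast
qed

lemma outside_children_subtrees: "depth z \<le> depth v \<Longrightarrow> \<forall>y\<in>C. z \<notin> subtree y"
  using depth_in_children depth_le_in_subtree by fastforce

lemma patch_parent:
  assumes x: "x \<in> V" "x \<noteq> r" shows "parent (patch x) = patch (parent x)"
proof -
  consider "x \<in> C" | y where "y \<in> C" "x \<in> subtree y" "x \<noteq> y" | "\<forall>y\<in>C. x \<notin> subtree y"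
    by blast
  then show ?thesis
  proof cases
    case 1
    then have "patch x \<in> C" using patch_subtree(1,3)[OF 1 self_in_subtree[OF x(1)]] by simp
    then have "parent (patch x) = v" using children by blast
    moreover have "parent x = v" using children 1 by blast
    ultimately show ?thesis using outside_children_subtrees[of v] patch_outside by simp
  next
    case 2
    then have p: "parent x \<in> subtree y" using parent_in_subtree by blast
    have "parent (patch x) = parent (T y x)" using patch_subtree(1) 2 by simp
    also have "\<dots> = T y (parent x)" using Aut_parent T_Aut 2(1) x by blast
    also have "\<dots> = patch (parent x)" using patch_subtree(1) 2(1) p by simp
    finally show ?thesis .
  next
    case 3
    then have "\<forall>y\<in>C. parent x \<notin> subtree y" using in_subtree_if_parent_in x by blast
    then show ?thesis using 3 patch_outside by simp
  qed
qed

lemma patch_Aut: "patch \<in> Aut"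
proof (rule AutI_parent)
  show "bij_betw patch V V" using patch_permutes permutes_imp_bij by blast
  show "patch r = r" using patch_outside outside_children_subtrees[of r] by simp
  show "\<forall>x\<in>V. c (patch x) = c x"
  proof
    fix x assume "x \<in> V"
    show "c (patch x) = c x"
    proof (cases "\<exists>y\<in>C. x \<in> subtree y")
      case True
      then show ?thesis using patch_subtree(1) AutD(3) T_Aut \<open>x \<in> V\<close> by metis
    qed (simp add: patch_outside)
  qed
qed (use patch_parent in blast)

end

lemma Aut_extend_from_children:
  assumes children: "\<forall>y\<in>C. y \<in> V \<and> y \<noteq> r \<and> parent y = v"
    and perm: "bij_betw \<beta> C C" and movable: "\<forall>y\<in>C. \<exists>\<tau>\<in>Aut. \<tau> y = \<beta> y"
  obtains \<rho> where "\<rho> \<in> Aut" "\<rho> permutes V" "\<forall>y\<in>C. \<rho> y = \<beta> y"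
    "\<forall>x. (\<forall>y\<in>C. x \<notin> subtree y) \<longrightarrow> \<rho> x = x"
proof -
  define T where "T y = (SOME \<tau>. \<tau> \<in> Aut \<and> \<tau> y = \<beta> y)" for y
  have T: "T y \<in> Aut" "T y y = \<beta> y" if "y \<in> C" for y
    using someI_ex[of "\<lambda>\<tau>. \<tau> \<in> Aut \<and> \<tau> y = \<beta> y"] movable that unfolding T_def by auto
  have T_Aut: "\<forall>y\<in>C. T y \<in> Aut" using T(1) by blast
  have T_perm: "bij_betw (\<lambda>y. T y y) C C" using perm T(2) by (simp cong: bij_betw_cong)
  show ?thesis
  proof (rule that)
    show "patch v C T \<in> Aut" by (rule patch_Aut[OF children T_Aut T_perm])
    show "patch v C T permutes V" by (rule patch_permutes[OF children T_Aut T_perm])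
    show "\<forall>y\<in>C. patch v C T y = \<beta> y"
      using patch_subtree(1)[OF children T_Aut T_perm] T(2) self_in_subtree children by simp
    show "\<forall>x. (\<forall>y\<in>C. x \<notin> subtree y) \<longrightarrow> patch v C T x = x"
      using patch_outside[OF children T_Aut T_perm] by blast
  qed
qed

subsection \<open>One automorphism generating all orbits\<close>

definition orbit_siblings :: "'a \<Rightarrow> 'a set" where
  "orbit_siblings x = {y \<in> orbit_of Aut x. parent y = parent x}"

lemma orbit_siblings:
  assumes "x \<in> V" "x \<noteq> r"
  shows self_in_orbit_siblings: "x \<in> orbit_siblings x"
    and finite_orbit_siblings: "finite (orbit_siblings x)"
    and orbit_siblings_children: "\<forall>y\<in>orbit_siblings x. y \<in> V \<and> y \<noteq> r \<and> parent y = parent x"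
proof -
  show "x \<in> orbit_siblings x" using self_in_orbit_of_Aut unfolding orbit_siblings_def by blast
  have sub: "orbit_siblings x \<subseteq> V"
    using orbit_of_Aut_subset_V[OF assms(1)] unfolding orbit_siblings_def by blast
  then show "finite (orbit_siblings x)" using finite_V finite_subset by blast
  have "y \<noteq> r" if "y \<in> orbit_of Aut x" for y
    using that Aut_neq_root assms unfolding orbit_of_def by blast
  then show "\<forall>y\<in>orbit_siblings x. y \<in> V \<and> y \<noteq> r \<and> parent y = parent x"
    using sub unfolding orbit_siblings_def by blast
qed

lemma Aut_fixing_parent_permutes_orbit_siblings:
  assumes "\<tau> \<in> Aut" "x \<in> V" "x \<noteq> r" "\<tau> (parent x) = parent x"
  shows "bij_betw \<tau> (orbit_siblings x) (orbit_siblings x)"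
proof -
  let ?C = "orbit_siblings x"
  have C: "y \<in> V" "y \<noteq> r" "parent y = parent x" if "y \<in> ?C" for y
    using orbit_siblings_children[OF assms(2,3)] that by blast+
  have into: "\<tau> ` ?C \<subseteq> ?C"
  proof
    fix z assume "z \<in> \<tau> ` ?C"
    then obtain y where y: "y \<in> ?C" "z = \<tau> y" by blast
    have "parent z = parent x"
      using Aut_parent[OF assms(1) C(1,2)[OF y(1)]] C(3)[OF y(1)] assms(4) y(2) by simp
    moreover have "y \<in> orbit_of Aut x" using y(1) unfolding orbit_siblings_def by blast
    moreover have "z \<in> orbit_of Aut y" using assms(1) y(2) unfolding orbit_of_def by blast
    ultimately show "z \<in> ?C" using orbit_of_Aut_eq[OF assms(2)] unfolding orbit_siblings_def by blast
  qed
  have inj: "inj_on \<tau> ?C"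
  proof (rule inj_onI)
    fix y y' assume "y \<in> ?C" "y' \<in> ?C" "\<tau> y = \<tau> y'"
    then show "y = y'" using Aut_inj_iff[OF assms(1)] C(1) by blast
  qed
  have "\<tau> ` ?C = ?C" by (rule endo_inj_surj[OF finite_orbit_siblings[OF assms(2,3)] into inj])
  then show ?thesis using inj unfolding bij_betw_def by blast
qed

lemma orbit_siblings_transitive:
  assumes "x \<in> V" "y \<in> orbit_siblings x" "y' \<in> orbit_siblings x" obtains \<tau> where "\<tau> \<in> Aut" "\<tau> y = y'"
proof -
  have "y \<in> orbit_of Aut x" "y' \<in> orbit_of Aut x" using assms(2,3) unfolding orbit_siblings_def by blast+
  then have "y' \<in> orbit_of Aut y" using orbit_of_Aut_eq[OF assms(1)] by blast
  then show ?thesis using that unfolding orbit_of_def by blast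
qed

lemma funpow_Aut_into_orbit_siblings:
  assumes "\<sigma> \<in> Aut" "\<tau> \<in> Aut" "x \<in> V" "x \<noteq> r" "(\<sigma> ^^ t) (\<tau> (parent x)) = parent x"
  shows "(\<sigma> ^^ t) (\<tau> x) \<in> orbit_siblings x"
proof -
  have "(\<sigma> ^^ t) \<circ> \<tau> \<in> Aut" using Aut_comp[OF Aut_funpow[OF assms(1)] assms(2)] .
  then have "(\<sigma> ^^ t) (\<tau> x) \<in> orbit_of Aut x" unfolding orbit_of_def by (metis comp_apply image_eqI)
  moreover have "parent ((\<sigma> ^^ t) (\<tau> x)) = parent x"
    using Aut_parent[OF \<open>(\<sigma> ^^ t) \<circ> \<tau> \<in> Aut\<close> assms(3,4)] assms(5) by simp
  ultimately show ?thesis unfolding orbit_siblings_def by blast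
qed

text \<open>Before the period of the parent, \<open>\<sigma>\<close> moves the siblings to children of other vertices,
  where \<open>\<rho>\<close> does nothing.\<close>
lemma twist_agrees_before_period:
  assumes \<sigma>: "\<sigma> \<in> Aut" and x: "x \<in> V" "x \<noteq> r"
    and \<rho>: "\<forall>z. (\<forall>y\<in>orbit_siblings x. z \<notin> subtree y) \<longrightarrow> \<rho> z = z"
    and y: "y \<in> orbit_siblings x" and t: "t < least_power \<sigma> (parent x)"
  shows "((\<rho> \<circ> \<sigma>) ^^ t) y = (\<sigma> ^^ t) y"
proof (rule funpow_comp_eq_funpow, intro allI impI)
  fix j assume j: "0 < j \<and> j \<le> t"
  have "(\<sigma> ^^ j) (parent x) \<noteq> parent x"
    using least_power_le[where f = \<sigma> and n = j and x = "parent x"] j t by auto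
  have yy: "y \<in> V" "y \<noteq> r" "parent y = parent x" using orbit_siblings_children[OF x] y by auto
  have depth_sibling: "depth y' = Suc (depth (parent x))" if "y' \<in> orbit_siblings x" for y'
    using depth_parent[of y'] orbit_siblings_children[OF x] that by simp
  have "(\<sigma> ^^ j) y \<notin> subtree y'" if y': "y' \<in> orbit_siblings x" for y'
  proof
    assume in_subtree: "(\<sigma> ^^ j) y \<in> subtree y'"
    have "depth ((\<sigma> ^^ j) y) = depth y'"
      using Aut_depth[OF Aut_funpow[OF \<sigma>] yy(1)] depth_sibling y y' by simp
    then have "parent ((\<sigma> ^^ j) y) = parent x"
      using in_subtree_depth_eq[OF in_subtree] orbit_siblings_children[OF x] y' by simp
    moreover have "parent ((\<sigma> ^^ j) y) = (\<sigma> ^^ j) (parent x)"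
      using Aut_parent[OF Aut_funpow[OF \<sigma>] yy(1,2)] yy(3) by simp
    ultimately show False using \<open>(\<sigma> ^^ j) (parent x) \<noteq> parent x\<close> by simp
  qed
  then show "\<rho> ((\<sigma> ^^ j) y) = (\<sigma> ^^ j) y" using \<rho> by blast
qed

lemma twist_orbit_siblings:
  assumes \<sigma>: "\<sigma> \<in> Aut" "\<sigma> permutes V" and x: "x \<in> V" "x \<noteq> r"
  obtains \<rho> where "\<rho> \<in> Aut" "\<rho> permutes V"
    "\<forall>z. (\<forall>y\<in>orbit_siblings x. z \<notin> subtree y) \<longrightarrow> \<rho> z = z"
    "orbit_siblings x \<subseteq> orbit (\<rho> \<circ> \<sigma>) x"
proof -
  let ?C = "orbit_siblings x"
  define s where "s = least_power \<sigma> (parent x)"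
  have perm: "permutation \<sigma>" using permutes_imp_permutation[OF finite_V \<sigma>(2)] .
  have s: "0 < s" "(\<sigma> ^^ s) (parent x) = parent x"
    using least_power_of_permutation[OF perm] unfolding s_def by auto
  let ?\<pi> = "\<sigma> ^^ s"
  have \<pi>: "bij_betw ?\<pi> ?C ?C"
    using Aut_fixing_parent_permutes_orbit_siblings[OF Aut_funpow[OF \<sigma>(1)] x s(2)] .
  obtain \<kappa> where \<kappa>: "\<kappa> permutes ?C" "\<forall>y\<in>?C. \<exists>i. (\<kappa> ^^ i) x = y"
    by (rule cyclic_permutation_exists[OF finite_orbit_siblings[OF x] self_in_orbit_siblings[OF x]])
  define \<beta> where "\<beta> y = \<kappa> (inv_into ?C ?\<pi> y)" for y
  have \<beta>: "bij_betw \<beta> ?C ?C"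
    using bij_betw_trans[OF bij_betw_inv_into[OF \<pi>] permutes_imp_bij[OF \<kappa>(1)]]
    unfolding \<beta>_def comp_def .
  have "\<forall>y\<in>?C. \<exists>\<tau>\<in>Aut. \<tau> y = \<beta> y"
    using orbit_siblings_transitive[OF x(1)] bij_betwE[OF \<beta>] by metis
  then obtain \<rho> where \<rho>: "\<rho> \<in> Aut" "\<rho> permutes V" "\<forall>y\<in>?C. \<rho> y = \<beta> y"
    "\<forall>z. (\<forall>y\<in>?C. z \<notin> subtree y) \<longrightarrow> \<rho> z = z"
    by (rule Aut_extend_from_children[OF orbit_siblings_children[OF x] \<beta>])
  obtain s' where s': "s = Suc s'" using s(1) gr0_implies_Suc by blast
  have cycle: "\<forall>y\<in>?C. ((\<rho> \<circ> \<sigma>) ^^ s) y = \<kappa> y"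
  proof
    fix y assume y: "y \<in> ?C"
    have "((\<rho> \<circ> \<sigma>) ^^ s) y = \<rho> (\<sigma> (((\<rho> \<circ> \<sigma>) ^^ s') y))" by (simp add: s')
    also have "\<dots> = \<rho> (?\<pi> y)"
      using twist_agrees_before_period[OF \<sigma>(1) x \<rho>(4) y, of s'] s' unfolding s_def by simp
    also have "\<dots> = \<beta> (?\<pi> y)" using \<rho>(3) bij_betwE[OF \<pi>] y by blast
    also have "\<dots> = \<kappa> y" unfolding \<beta>_def using bij_betw_inv_into_left[OF \<pi> y] by simp
    finally show "((\<rho> \<circ> \<sigma>) ^^ s) y = \<kappa> y" .
  qed
  have "permutation (\<rho> \<circ> \<sigma>)"
    using permutes_imp_permutation[OF finite_V permutes_compose[OF \<sigma>(2) \<rho>(2)]] .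
  then have "?C \<subseteq> orbit (\<rho> \<circ> \<sigma>) x"
    by (rule cycle_subset_orbit[OF _ cycle \<kappa>(1) self_in_orbit_siblings[OF x] \<kappa>(2)])
  then show ?thesis using that \<rho>(1,2,4) by blast
qed

text \<open>Write \<open>\<tau> (parent x) = (\<sigma> ^^ t) (parent x)\<close> with \<open>t\<close> below the period of \<open>parent x\<close>.
  Undoing these \<open>t\<close> steps moves \<open>\<tau> x\<close> to a sibling of \<open>x\<close>, which \<open>\<rho> \<circ> \<sigma>\<close> reaches; from
  there \<open>\<rho> \<circ> \<sigma>\<close> agrees with \<open>\<sigma>\<close> for the remaining \<open>t\<close> steps.\<close>
lemma orbit_of_Aut_subset_twisted_orbit:
  assumes \<sigma>: "\<sigma> \<in> Aut" "\<sigma> permutes V" and x: "x \<in> V" "x \<noteq> r"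
    and \<rho>: "\<rho> permutes V" "\<forall>z. (\<forall>y\<in>orbit_siblings x. z \<notin> subtree y) \<longrightarrow> \<rho> z = z"
      "orbit_siblings x \<subseteq> orbit (\<rho> \<circ> \<sigma>) x"
    and parent_orbit: "orbit_of Aut (parent x) \<subseteq> orbit \<sigma> (parent x)"
  shows "orbit_of Aut x \<subseteq> orbit (\<rho> \<circ> \<sigma>) x"
proof
  let ?v = "parent x" and ?s = "least_power \<sigma> (parent x)"
  have perm: "permutation \<sigma>" using permutes_imp_permutation[OF finite_V \<sigma>(2)] .
  have perm': "permutation (\<rho> \<circ> \<sigma>)"
    using permutes_imp_permutation[OF finite_V permutes_compose[OF \<sigma>(2) \<rho>(1)]] .
  obtain N where N: "\<sigma> ^^ N = id" "0 < N" using permutation_is_nilpotent[OF perm] by blast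
  fix y assume "y \<in> orbit_of Aut x"
  then obtain \<tau> where \<tau>: "\<tau> \<in> Aut" "y = \<tau> x" unfolding orbit_of_def by blast
  have "\<tau> ?v \<in> orbit \<sigma> ?v" using parent_orbit \<tau>(1) unfolding orbit_of_def by blast
  then obtain j where "\<tau> ?v = (\<sigma> ^^ j) ?v" using orbit_altdef_permutation[OF perm] by blast
  moreover have "(\<sigma> ^^ (j mod ?s)) ?v = (\<sigma> ^^ j) ?v"
    by (rule funpow_mod_eq[OF least_power_of_permutation(1)[OF perm]])
  ultimately have t: "\<tau> ?v = (\<sigma> ^^ (j mod ?s)) ?v" "j mod ?s < ?s"
    using least_power_of_permutation(2)[OF perm] by simp_all
  let ?t = "j mod ?s"
  have "?t \<le> N" using t(2) least_power_le[where f = \<sigma> and n = N and x = ?v] N by simp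
  then have undo: "(\<sigma> ^^ (N - ?t)) ((\<sigma> ^^ ?t) z) = z" "(\<sigma> ^^ ?t) ((\<sigma> ^^ (N - ?t)) z) = z" for z
    using N(1) by (metis comp_apply funpow_add id_apply le_add_diff_inverse le_add_diff_inverse2)+
  define y' where "y' = (\<sigma> ^^ (N - ?t)) y"
  have "y' \<in> orbit_siblings x"
    unfolding y'_def \<tau>(2) using funpow_Aut_into_orbit_siblings[OF \<sigma>(1) \<tau>(1) x] t(1) undo(1) by simp
  then have "y' \<in> {((\<rho> \<circ> \<sigma>) ^^ n) x | n. True}"
    using \<rho>(3) orbit_altdef_permutation[OF perm', of x] by blast
  then obtain n where n: "((\<rho> \<circ> \<sigma>) ^^ n) x = y'" by blast
  have "((\<rho> \<circ> \<sigma>) ^^ (?t + n)) x = ((\<rho> \<circ> \<sigma>) ^^ ?t) y'" using n by (simp add: funpow_add)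
  also have "\<dots> = (\<sigma> ^^ ?t) y'"
    using twist_agrees_before_period[OF \<sigma>(1) x \<rho>(2) \<open>y' \<in> orbit_siblings x\<close> t(2)] .
  also have "\<dots> = y" unfolding y'_def using undo(2) .
  finally show "y \<in> orbit (\<rho> \<circ> \<sigma>) x"
    unfolding orbit_altdef_permutation[OF perm'] by blast
qed

text \<open>The invariant of the construction of \<open>\<sigma>\<close>, which adds one \<open>Aut\<close>-orbit to \<open>D\<close> at a time.\<close>
definition orbit_generator :: "('a \<Rightarrow> 'a) \<Rightarrow> 'a set \<Rightarrow> bool" where
  "orbit_generator \<sigma> D \<longleftrightarrow> \<sigma> \<in> Aut \<and> \<sigma> permutes V \<and> r \<in> D \<and> D \<subseteq> V \<and>
     (\<forall>x\<in>D. x \<noteq> r \<longrightarrow> parent x \<in> D) \<and>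
     (\<forall>x\<in>D. orbit_of Aut x \<subseteq> D \<and> orbit_of Aut x \<subseteq> orbit \<sigma> x)"

lemma orbit_generator_root: "orbit_generator id {r}"
proof -
  have "orbit_of Aut r = {r}" using AutD(2) self_in_orbit_of_Aut[of r] unfolding orbit_of_def by auto
  moreover have "orbit id r = {r}" by (simp add: orbit_eq_singleton_iff)
  ultimately show ?thesis unfolding orbit_generator_def using Aut_id root_in_V by auto
qed

lemma orbit_generator_add_orbit:
  assumes gen: "orbit_generator \<sigma> D" and x: "x \<in> V" "x \<noteq> r" "parent x \<in> D"
    and \<sigma>': "\<sigma>' \<in> Aut" "\<sigma>' permutes V" "\<forall>z\<in>D. orbit \<sigma>' z = orbit \<sigma> z"
      "orbit_of Aut x \<subseteq> orbit \<sigma>' x"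
  shows "orbit_generator \<sigma>' (D \<union> orbit_of Aut x)"
proof -
  have D: "r \<in> D" "D \<subseteq> V" "\<forall>z\<in>D. z \<noteq> r \<longrightarrow> parent z \<in> D"
    "\<forall>z\<in>D. orbit_of Aut z \<subseteq> D \<and> orbit_of Aut z \<subseteq> orbit \<sigma> z"
    using gen unfolding orbit_generator_def by auto
  have perm': "permutation \<sigma>'" using permutes_imp_permutation[OF finite_V \<sigma>'(2)] .
  have sub: "D \<union> orbit_of Aut x \<subseteq> V" using D(2) orbit_of_Aut_subset_V[OF x(1)] by blast
  have "parent z \<in> D" if z: "z \<in> orbit_of Aut x" "z \<noteq> r" for z
  proof -
    obtain \<tau> where \<tau>: "\<tau> \<in> Aut" "z = \<tau> x" using z(1) unfolding orbit_of_def by blast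
    then have "parent z \<in> orbit_of Aut (parent x)"
      using Aut_parent[OF \<tau>(1) x(1,2)] unfolding orbit_of_def by simp
    then show ?thesis using D(4) x(3) by blast
  qed
  then have closed: "\<forall>z\<in>D \<union> orbit_of Aut x. z \<noteq> r \<longrightarrow> parent z \<in> D \<union> orbit_of Aut x"
    using D(3) by blast
  have "orbit_of Aut z \<subseteq> D \<union> orbit_of Aut x \<and> orbit_of Aut z \<subseteq> orbit \<sigma>' z"
    if "z \<in> D \<union> orbit_of Aut x" for z
  proof (cases "z \<in> D")
    case True then show ?thesis using D(4) \<sigma>'(3) by blast
  next
    case False
    then have z: "z \<in> orbit_of Aut x" using that by blast
    have "orbit \<sigma>' z = orbit \<sigma>' x" using orbit_eq_if_in_orbit[OF perm'] \<sigma>'(4) z by blast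
    then show ?thesis using orbit_of_Aut_eq[OF x(1) z] \<sigma>'(4) by simp
  qed
  then have orbits: "\<forall>z\<in>D \<union> orbit_of Aut x.
      orbit_of Aut z \<subseteq> D \<union> orbit_of Aut x \<and> orbit_of Aut z \<subseteq> orbit \<sigma>' z" by blast
  show ?thesis unfolding orbit_generator_def using \<sigma>'(1,2) D(1) sub closed orbits by simp
qed

text \<open>\<open>D\<close> meets no subtree below the orbit of \<open>x\<close>, so \<open>\<rho>\<close> fixes \<open>D\<close> pointwise.\<close>
lemma orbit_generator_twist_keeps_orbits:
  assumes gen: "orbit_generator \<sigma> D" and x: "x \<in> V" "x \<notin> D"
    and \<rho>: "\<forall>z. (\<forall>y\<in>orbit_siblings x. z \<notin> subtree y) \<longrightarrow> \<rho> z = z"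
    and z: "z \<in> D"
  shows "orbit (\<rho> \<circ> \<sigma>) z = orbit \<sigma> z"
proof -
  have \<sigma>: "\<sigma> \<in> Aut" and closed: "\<forall>z\<in>D. z \<noteq> r \<longrightarrow> parent z \<in> D"
    and invariant: "\<forall>z\<in>D. orbit_of Aut z \<subseteq> D"
    using gen unfolding orbit_generator_def by auto
  have fixes_D: "\<rho> w = w" if "w \<in> D" for w
  proof -
    have "w \<notin> subtree y" if y: "y \<in> orbit_siblings x" for y
    proof
      assume "w \<in> subtree y"
      then have "y \<in> D" using subtree_root_in_parent_closed[OF closed] \<open>w \<in> D\<close> by blast
      moreover have "y \<in> orbit_of Aut x" using y unfolding orbit_siblings_def by blast
      then have "x \<in> orbit_of Aut y" using orbit_of_Aut_eq[OF x(1)] self_in_orbit_of_Aut by blast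
      ultimately show False using invariant x(2) by blast
    qed
    then show ?thesis using \<rho> by blast
  qed
  have "(\<sigma> ^^ j) z \<in> orbit_of Aut z" for j
    using Aut_funpow[OF \<sigma>] unfolding orbit_of_def by blast
  then have "\<rho> ((\<sigma> ^^ j) z) = (\<sigma> ^^ j) z" for j using invariant z fixes_D by blast
  then have "((\<rho> \<circ> \<sigma>) ^^ j) z = (\<sigma> ^^ j) z" for j by (intro funpow_comp_eq_funpow) blast
  then show ?thesis unfolding orbit_altdef by simp
qed

lemma orbit_generator_extend:
  assumes gen: "orbit_generator \<sigma> D" and "D \<noteq> V"
  obtains \<sigma>' D' where "orbit_generator \<sigma>' D'" "D \<subset> D'"
proof -
  have \<sigma>: "\<sigma> \<in> Aut" "\<sigma> permutes V" and D: "r \<in> D" "D \<subseteq> V"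
    "\<forall>z\<in>D. orbit_of Aut z \<subseteq> orbit \<sigma> z"
    using gen unfolding orbit_generator_def by auto
  obtain x where x: "x \<in> V - D" and x_min: "\<forall>y\<in>V - D. depth x \<le> depth y"
    using ex_has_least_nat[of "\<lambda>x. x \<in> V - D"] D(2) \<open>D \<noteq> V\<close> by blast
  have xV: "x \<in> V" and xr: "x \<noteq> r" using x D(1) by auto
  have "parent x \<in> V" "depth (parent x) < depth x"
    using parent_in_V[OF xV xr] depth_parent[OF xV xr] by auto
  then have px: "parent x \<in> D" using x_min by (meson DiffI leD)
  obtain \<rho> where \<rho>: "\<rho> \<in> Aut" "\<rho> permutes V"
    "\<forall>z. (\<forall>y\<in>orbit_siblings x. z \<notin> subtree y) \<longrightarrow> \<rho> z = z"
    "orbit_siblings x \<subseteq> orbit (\<rho> \<circ> \<sigma>) x"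
    by (rule twist_orbit_siblings[OF \<sigma> xV xr])
  have "\<forall>z\<in>D. orbit (\<rho> \<circ> \<sigma>) z = orbit \<sigma> z"
    using orbit_generator_twist_keeps_orbits[OF gen xV _ \<rho>(3)] x by blast
  moreover have "orbit_of Aut x \<subseteq> orbit (\<rho> \<circ> \<sigma>) x"
    by (rule orbit_of_Aut_subset_twisted_orbit[OF \<sigma> xV xr \<rho>(2,3,4)]) (use D(3) px in blast)
  ultimately have "orbit_generator (\<rho> \<circ> \<sigma>) (D \<union> orbit_of Aut x)"
    by (rule orbit_generator_add_orbit[OF gen xV xr px Aut_comp[OF \<rho>(1) \<sigma>(1)]
        permutes_compose[OF \<sigma>(2) \<rho>(2)]])
  moreover have "D \<subset> D \<union> orbit_of Aut x" using x self_in_orbit_of_Aut by blast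
  ultimately show ?thesis by (rule that)
qed

lemma exists_orbit_generator: obtains \<sigma> where "orbit_generator \<sigma> V"
proof -
  have "\<exists>\<sigma>. orbit_generator \<sigma> V" if "orbit_generator \<sigma> D" for \<sigma> D
    using that
  proof (induction "card (V - D)" arbitrary: \<sigma> D rule: less_induct)
    case less
    show ?case
    proof (cases "D = V")
      case False
      then obtain \<sigma>' D' where gen': "orbit_generator \<sigma>' D'" "D \<subset> D'"
        using orbit_generator_extend[OF less.prems] by blast
      then have "card (V - D') < card (V - D)"
        using finite_V unfolding orbit_generator_def by (intro psubset_card_mono) auto
      then show ?thesis using less.hyps gen'(1) by blast
    qed (use less.prems in blast)
  qed
  then show ?thesis using orbit_generator_root that by blast
qed

theorem exists_Aut_generating_orbits:
  obtains \<sigma> where "\<sigma> \<in> Aut" "\<sigma> permutes V" "\<forall>x\<in>V. orbit_of Aut x = orbit \<sigma> x"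
proof -
  obtain \<sigma> where "orbit_generator \<sigma> V" by (rule exists_orbit_generator)
  then have "\<sigma> \<in> Aut" "\<sigma> permutes V" "\<forall>x\<in>V. orbit_of Aut x \<subseteq> orbit \<sigma> x"
    unfolding orbit_generator_def by auto
  then show ?thesis using that orbit_subset_orbit_of_Aut by blast
qed

lemma leaf_stabiliser_trivial:
  assumes \<sigma>: "\<sigma> \<in> Aut" "\<sigma> permutes V" "\<forall>x\<in>V. orbit_of Aut x = orbit \<sigma> x"
    and equal: "\<forall>l1\<in>tree_leaves V E r. \<forall>l2\<in>tree_leaves V E r.
      card (orbit_of Aut l1) = card (orbit_of Aut l2)"
    and l: "l \<in> tree_leaves V E r" "(\<sigma> ^^ a) l = l"
  shows "\<sigma> ^^ a = id"
proof -
  have perm: "permutation \<sigma>" using permutes_imp_permutation[OF finite_V \<sigma>(2)] .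
  have leaves_V: "tree_leaves V E r \<subseteq> V" unfolding tree_leaves_def by blast
  let ?p = "least_power \<sigma> l"
  have "least_power \<sigma> l' = ?p" if l': "l' \<in> tree_leaves V E r" for l'
  proof -
    have "card (orbit \<sigma> l') = card (orbit \<sigma> l)"
      using equal l(1) l' \<sigma>(3) leaves_V by (metis subsetD)
    then show ?thesis using card_orbit_permutation[OF perm] by simp
  qed
  then have fix_leaves: "(\<sigma> ^^ ?p) l' = l'" if "l' \<in> tree_leaves V E r" for l'
    using least_power_of_permutation(1)[OF perm, of l'] that by simp
  have "(\<sigma> ^^ ?p) y = y" for y
  proof (cases "y \<in> V")
    case True
    then obtain l' where "l' \<in> tree_leaves V E r" "l' \<in> subtree y" by (rule subtree_contains_leaf)
    then show ?thesis using Aut_fixes_ancestors[OF Aut_funpow[OF \<sigma>(1)]] fix_leaves by blast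
  qed (rule permutes_not_in[OF permutes_funpow[OF \<sigma>(2)]])
  then have "\<sigma> ^^ ?p = id" by auto
  moreover obtain k where "a = ?p * k" using least_power_minimal[OF l(2)] by (elim dvdE)
  ultimately show ?thesis by (simp add: funpow_mult[symmetric])
qed

end

section \<open>The graph \<open>H\<^sub>T\<close>\<close>

lemma graph_aut_comp:
  assumes "\<sigma> \<in> graph_aut V E c" "\<tau> \<in> graph_aut V E c" shows "\<sigma> \<circ> \<tau> \<in> graph_aut V E c"
proof -
  have \<sigma>: "bij_betw \<sigma> V V" "\<forall>x\<in>V. \<forall>y\<in>V. E (\<sigma> x) (\<sigma> y) \<longleftrightarrow> E x y" "\<forall>x\<in>V. c (\<sigma> x) = c x"
    and \<tau>: "bij_betw \<tau> V V" "\<forall>x\<in>V. \<forall>y\<in>V. E (\<tau> x) (\<tau> y) \<longleftrightarrow> E x y" "\<forall>x\<in>V. c (\<tau> x) = c x"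
    using assms unfolding graph_aut_def by auto
  have "\<tau> x \<in> V" if "x \<in> V" for x using bij_betwE[OF \<tau>(1)] that by blast
  then show ?thesis using \<sigma> \<tau> bij_betw_trans[OF \<tau>(1) \<sigma>(1)] unfolding graph_aut_def by simp
qed

lemma graph_aut_funpow: assumes "\<sigma> \<in> graph_aut V E c" shows "\<sigma> ^^ n \<in> graph_aut V E c"
proof (induction n)
  case 0 show ?case by (simp add: graph_aut_def bij_betw_id[unfolded id_def])
next
  case (Suc n) show ?case unfolding funpow.simps(2) by (rule graph_aut_comp[OF assms Suc.IH])
qed

locale gadget_graph =
  fixes V :: "'a set" and E :: "'a \<Rightarrow> 'a \<Rightarrow> bool" and c :: "'a \<Rightarrow> 'c"
    and \<sigma> :: "'a \<Rightarrow> 'a" and xs :: "'a list"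
  assumes finite_V: "finite V" and simple: "simple_graph V E"
    and \<sigma>_permutes: "\<sigma> permutes V" and \<sigma>_aut: "\<sigma> \<in> graph_aut V E c" and set_xs: "set xs = V"
begin

definition period :: nat where
  "period = (LEAST m. 0 < m \<and> \<sigma> ^^ m = id)"

text \<open>Gadget vertices are coded in the \<open>Inr\<close> part as pairs: \<open>(j, 0)\<close> for the hub of gadget \<open>j\<close>
  and \<open>(j, Suc i)\<close> for its \<open>i\<close>-th pendant; the second component is the colour.\<close>
definition hub :: "nat \<Rightarrow> 'a + nat" where
  "hub j = Inr (prod_encode (j, 0))"

definition pendant :: "nat \<Rightarrow> nat \<Rightarrow> 'a + nat" where
  "pendant j i = Inr (prod_encode (j, Suc i))"

definition VH :: "('a + nat) set" where
  "VH = Inl ` V \<union> hub ` {..<period} \<union> (\<lambda>(j, i). pendant j i) ` ({..<period} \<times> {..<length xs})"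

definition EH :: "'a + nat \<Rightarrow> 'a + nat \<Rightarrow> bool" where
  "EH a b \<longleftrightarrow> (\<exists>x y. a = Inl x \<and> b = Inl y \<and> E x y) \<or>
     (\<exists>j<period. \<exists>i<length xs. a = hub j \<and> b = pendant j i \<or> a = pendant j i \<and> b = hub j) \<or>
     (\<exists>j<period. \<exists>i<length xs. a = pendant j i \<and> b = Inl ((\<sigma> ^^ j) (xs ! i)) \<or>
        a = Inl ((\<sigma> ^^ j) (xs ! i)) \<and> b = pendant j i)"

definition cH :: "'a + nat \<Rightarrow> 'c + nat" where
  "cH = case_sum (\<lambda>x. Inl (c x)) (\<lambda>k. Inr (snd (prod_decode k)))"

definition rotation :: "nat \<Rightarrow> 'a + nat \<Rightarrow> 'a + nat" where
  "rotation k = case_sum (\<lambda>x. Inl ((\<sigma> ^^ k) x))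
     (\<lambda>n. Inr (prod_encode ((fst (prod_decode n) + k) mod period, snd (prod_decode n))))"

lemma gadget_vertices_distinct [simp]:
  "hub j = hub j' \<longleftrightarrow> j = j'" "pendant j i = pendant j' i' \<longleftrightarrow> j = j' \<and> i = i'"
  "hub j \<noteq> pendant j' i'" "pendant j' i' \<noteq> hub j" "Inl x \<noteq> hub j" "hub j \<noteq> Inl x"
  "Inl x \<noteq> pendant j i" "pendant j i \<noteq> Inl x"
  unfolding hub_def pendant_def by (simp_all add: prod_encode_eq)

lemma cH_simps [simp]: "cH (Inl x) = Inl (c x)" "cH (hub j) = Inr 0" "cH (pendant j i) = Inr (Suc i)"
  unfolding hub_def pendant_def cH_def by (simp_all add: prod_encode_inverse)

lemma rotation_simps [simp]:
  "rotation k (Inl x) = Inl ((\<sigma> ^^ k) x)" "rotation k (hub j) = hub ((j + k) mod period)"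
  "rotation k (pendant j i) = pendant ((j + k) mod period) i"
  unfolding hub_def pendant_def rotation_def by (simp_all add: prod_encode_inverse)

lemma period: "0 < period" "\<sigma> ^^ period = id"
proof -
  obtain N where N: "\<sigma> ^^ N = id" "0 < N"
    using permutation_is_nilpotent[OF permutes_imp_permutation[OF finite_V \<sigma>_permutes]] .
  have "0 < period \<and> \<sigma> ^^ period = id"
    unfolding period_def by (rule LeastI[where P = "\<lambda>m. 0 < m \<and> \<sigma> ^^ m = id" and k = N]) (use N in simp)
  then show "0 < period" "\<sigma> ^^ period = id" by auto
qed

lemma funpow_mod_period: "(\<sigma> ^^ (k mod period)) x = (\<sigma> ^^ k) x"
  using funpow_mod_eq[where f = \<sigma> and n = period and x = x and m = k] period(2) by simp

lemma funpow_eq_below_period: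
  assumes "\<forall>x\<in>V. (\<sigma> ^^ a) x = (\<sigma> ^^ b) x" "a < period" "b < period" shows "a = b"
proof -
  have diff_id: "\<sigma> ^^ (j - i) = id" if "i \<le> j" "\<forall>x\<in>V. (\<sigma> ^^ i) x = (\<sigma> ^^ j) x" for i j
  proof
    fix x show "(\<sigma> ^^ (j - i)) x = id x"
    proof (cases "x \<in> V")
      case True
      then show ?thesis using funpow_diff[OF permutes_inj[OF \<sigma>_permutes] that(1)] that(2) by simp
    qed (simp add: permutes_not_in[OF permutes_funpow[OF \<sigma>_permutes]])
  qed
  have below: "\<sigma> ^^ d \<noteq> id" if "0 < d" "d < period" for d
    using not_less_Least[of d "\<lambda>m. 0 < m \<and> \<sigma> ^^ m = id"] that unfolding period_def by blast
  show ?thesis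
  proof (rule ccontr)
    assume "a \<noteq> b"
    then consider "a < b" | "b < a" by linarith
    then show False
    proof cases
      case 1 then show False using diff_id[of a b] below[of "b - a"] assms by simp
    next
      case 2 then show False using diff_id[of b a] below[of "a - b"] assms by simp
    qed
  qed
qed

lemma funpow_\<sigma>_in_V: "x \<in> V \<Longrightarrow> (\<sigma> ^^ k) x \<in> V"
  using permutes_in_image[OF permutes_funpow[OF \<sigma>_permutes]] by blast

lemma nth_xs_in_V: "i < length xs \<Longrightarrow> xs ! i \<in> V"
  using set_xs nth_mem by blast

lemma edge_in_V: "E x y \<Longrightarrow> x \<in> V \<and> y \<in> V"
  using simple unfolding simple_graph_def by blast

lemma xs_index:
  assumes "x \<in> V" obtains i where "i < length xs" "xs ! i = x"
  using assms set_xs by (metis in_set_conv_nth)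

lemma funpow_\<sigma>_shift: "(\<sigma> ^^ k) ((\<sigma> ^^ j) x) = (\<sigma> ^^ ((j + k) mod period)) x"
proof -
  have "(\<sigma> ^^ k) ((\<sigma> ^^ j) x) = (\<sigma> ^^ (k + j)) x" by (simp add: funpow_add)
  then show ?thesis by (simp add: funpow_mod_period add.commute)
qed

lemma in_VH [simp]:
  "Inl x \<in> VH \<longleftrightarrow> x \<in> V" "hub j \<in> VH \<longleftrightarrow> j < period"
  "pendant j i \<in> VH \<longleftrightarrow> j < period \<and> i < length xs"
  unfolding VH_def by auto

lemma VH_cases [consumes 1, case_names tree hub pendant]:
  assumes "z \<in> VH"
  obtains (tree) x where "x \<in> V" "z = Inl x" | (hub) j where "j < period" "z = hub j"
    | (pendant) j i where "j < period" "i < length xs" "z = pendant j i"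
  using assms unfolding VH_def by auto

lemma EH_simps [simp]:
  "EH (Inl x) (Inl y) \<longleftrightarrow> E x y"
  "EH (hub j) (pendant k i) \<longleftrightarrow> j = k \<and> j < period \<and> i < length xs"
  "EH (pendant j i) (Inl y) \<longleftrightarrow> j < period \<and> i < length xs \<and> y = (\<sigma> ^^ j) (xs ! i)"
  unfolding EH_def by auto

lemma EH_sym: "EH a b \<Longrightarrow> EH b a"
  using simple unfolding EH_def simple_graph_def by blast

lemma finite_VH: "finite VH"
  unfolding VH_def using finite_V by simp

lemma simple_graph_H: "simple_graph VH EH"
  unfolding simple_graph_def
proof (intro conjI allI impI)
  fix a b assume "EH a b"
  then show "a \<in> VH" "b \<in> VH"
    unfolding EH_def using edge_in_V funpow_\<sigma>_in_V nth_xs_in_V by auto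
  show "EH b a" using EH_sym \<open>EH a b\<close> .
next
  fix a show "\<not> EH a a" using simple unfolding EH_def simple_graph_def by auto
qed

lemma rotation_in_VH: assumes "z \<in> VH" shows "rotation k z \<in> VH"
  using assms by (cases rule: VH_cases) (simp_all add: funpow_\<sigma>_in_V period(1))

lemma rotation_edge:
  assumes "EH a b" shows "EH (rotation k a) (rotation k b)"
proof -
  have graph: "E ((\<sigma> ^^ k) x) ((\<sigma> ^^ k) y)" if "E x y" for x y
    using graph_aut_funpow[OF \<sigma>_aut, of k] that edge_in_V unfolding graph_aut_def by blast
  from assms consider x y where "a = Inl x" "b = Inl y" "E x y"
    | j i where "j < period" "i < length xs" "{a, b} = {hub j, pendant j i}"
    | j i where "j < period" "i < length xs" "{a, b} = {pendant j i, Inl ((\<sigma> ^^ j) (xs ! i))}"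
    unfolding EH_def by blast
  then show ?thesis
  proof cases
    case 1 then show ?thesis using graph by simp
  next
    case 2 then show ?thesis using period(1) EH_sym by (auto simp: doubleton_eq_iff)
  next
    case 3 then show ?thesis using period(1) EH_sym funpow_\<sigma>_shift by (auto simp: doubleton_eq_iff)
  qed
qed

lemma rotation_inverse:
  assumes "z \<in> VH" "k \<le> period" shows "rotation (period - k) (rotation k z) = z"
proof -
  have mod_back: "((j + k) mod period + (period - k)) mod period = j" if "j < period" for j
  proof -
    have "((j + k) mod period + (period - k)) mod period = (j + k + (period - k)) mod period"
      by (simp add: mod_add_left_eq)
    also have "j + k + (period - k) = j + period" using assms(2) by simp
    finally show ?thesis using that by simp
  qed
  show ?thesis using assms(1)
  proof (cases rule: VH_cases)
    case (tree x)
    have "(\<sigma> ^^ (period - k)) ((\<sigma> ^^ k) x) = (\<sigma> ^^ (period - k + k)) x"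
      by (simp add: funpow_add)
    then have "(\<sigma> ^^ (period - k)) ((\<sigma> ^^ k) x) = (\<sigma> ^^ period) x" using assms(2) by simp
    then show ?thesis using tree period(2) by simp
  qed (simp_all add: mod_back)
qed

lemma rotation_aut: assumes "k \<le> period" shows "rotation k \<in> graph_aut VH EH cH"
proof -
  have inv: "rotation (period - k) (rotation k z) = z" if "z \<in> VH" for z
    using rotation_inverse[OF that assms] .
  have "inj_on (rotation k) VH" by (rule inj_on_inverseI[of _ "rotation (period - k)"]) (rule inv)
  moreover have "rotation k ` VH \<subseteq> VH" using rotation_in_VH by blast
  ultimately have "bij_betw (rotation k) VH VH"
    unfolding bij_betw_def using endo_inj_surj[OF finite_VH] by blast
  moreover have "EH (rotation k x) (rotation k y) \<longleftrightarrow> EH x y" if "x \<in> VH" "y \<in> VH" for x y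
    using rotation_edge[of "rotation k x" "rotation k y" "period - k"] rotation_edge[of x y k] inv that
    by auto
  moreover have "cH (rotation k x) = cH x" if "x \<in> VH" for x
    using that graph_aut_funpow[OF \<sigma>_aut, of k] unfolding graph_aut_def
    by (cases rule: VH_cases) auto
  ultimately show ?thesis unfolding graph_aut_def by blast
qed

abbreviation AutH :: "('a + nat \<Rightarrow> 'a + nat) set" where
  "AutH \<equiv> graph_aut VH EH cH"

lemma AutHD:
  assumes "\<tau> \<in> AutH"
  shows "z \<in> VH \<Longrightarrow> \<tau> z \<in> VH" "z \<in> VH \<Longrightarrow> cH (\<tau> z) = cH z"
    "a \<in> VH \<Longrightarrow> b \<in> VH \<Longrightarrow> EH (\<tau> a) (\<tau> b) \<longleftrightarrow> EH a b"
  using assms unfolding graph_aut_def by (auto dest: bij_betwE)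

lemma AutH_tree:
  assumes "\<tau> \<in> AutH" "x \<in> V" obtains y where "y \<in> V" "\<tau> (Inl x) = Inl y"
  using AutHD(1,2)[OF assms(1), of "Inl x"] assms(2) by (cases rule: VH_cases) auto

lemma AutH_hub:
  assumes "\<tau> \<in> AutH" "j < period" obtains k where "k < period" "\<tau> (hub j) = hub k"
  using AutHD(1,2)[OF assms(1), of "hub j"] assms(2) by (cases rule: VH_cases) auto

lemma AutH_pendant:
  assumes "\<tau> \<in> AutH" "j < period" "i < length xs" "\<tau> (hub j) = hub k"
  shows "\<tau> (pendant j i) = pendant k i"
proof -
  have edge: "EH (hub k) (\<tau> (pendant j i))"
    using AutHD(3)[OF assms(1), of "hub j" "pendant j i"] assms by simp
  have colour: "cH (\<tau> (pendant j i)) = Inr (Suc i)" using AutHD(2)[OF assms(1)] assms(2,3) by simp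
  have "\<tau> (pendant j i) \<in> VH" using AutHD(1)[OF assms(1)] assms(2,3) by simp
  then show ?thesis using edge colour by (cases rule: VH_cases) auto
qed

text \<open>The tree vertex \<open>(\<sigma> ^^ j) (xs ! i)\<close> is the unique tree neighbour of the pendant of colour
  \<open>Suc i\<close> in gadget \<open>j\<close>.\<close>
lemma AutH_moves_gadget_neighbour:
  assumes "\<tau> \<in> AutH" "j < period" "i < length xs" "\<tau> (hub j) = hub k"
  shows "\<tau> (Inl ((\<sigma> ^^ j) (xs ! i))) = Inl ((\<sigma> ^^ k) (xs ! i))"
proof -
  have x: "(\<sigma> ^^ j) (xs ! i) \<in> V" using funpow_\<sigma>_in_V nth_xs_in_V assms(3) by blast
  obtain y where y: "y \<in> V" "\<tau> (Inl ((\<sigma> ^^ j) (xs ! i))) = Inl y" using AutH_tree[OF assms(1) x] .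
  have "EH (\<tau> (pendant j i)) (\<tau> (Inl ((\<sigma> ^^ j) (xs ! i))))"
    using AutHD(3)[OF assms(1), of "pendant j i" "Inl ((\<sigma> ^^ j) (xs ! i))"] assms(2,3) x by simp
  then show ?thesis using AutH_pendant[OF assms] y(2) by simp
qed

lemma AutH_is_rotation:
  assumes "\<tau> \<in> AutH" obtains k where "k < period" "\<forall>z\<in>VH. \<tau> z = rotation k z"
proof -
  obtain k where k: "k < period" "\<tau> (hub 0) = hub k" using AutH_hub[OF assms period(1)] .
  have tree: "\<tau> (Inl x) = Inl ((\<sigma> ^^ k) x)" if x: "x \<in> V" for x
  proof -
    obtain i where i: "i < length xs" "xs ! i = x" using xs_index[OF x] .
    show ?thesis using AutH_moves_gadget_neighbour[OF assms period(1) i(1) k(2)] i(2) by simp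
  qed
  have hub: "\<tau> (hub j) = hub ((j + k) mod period)" if j: "j < period" for j
  proof -
    obtain k' where k': "k' < period" "\<tau> (hub j) = hub k'" using AutH_hub[OF assms j] .
    have "(\<sigma> ^^ k') x = (\<sigma> ^^ ((j + k) mod period)) x" if x: "x \<in> V" for x
    proof -
      obtain i where i: "i < length xs" "xs ! i = x" using xs_index[OF x] .
      have "Inl ((\<sigma> ^^ k') x) = \<tau> (Inl ((\<sigma> ^^ j) x))"
        using AutH_moves_gadget_neighbour[OF assms j i(1) k'(2)] i(2) by simp
      also have "\<dots> = Inl ((\<sigma> ^^ k) ((\<sigma> ^^ j) x))" using tree[OF funpow_\<sigma>_in_V[OF x]] .
      finally show ?thesis by (simp add: funpow_\<sigma>_shift)
    qed
    then have "k' = (j + k) mod period"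
      using funpow_eq_below_period k'(1) period(1) by simp
    then show ?thesis using k'(2) by simp
  qed
  have "\<tau> z = rotation k z" if "z \<in> VH" for z
    using that
  proof (cases rule: VH_cases)
    case (pendant j i)
    then show ?thesis using AutH_pendant[OF assms pendant(1,2) hub[OF pendant(1)]] by simp
  qed (simp_all add: tree hub)
  then show ?thesis using that k(1) by blast
qed

lemma AutH_preserves_tree: "\<tau> \<in> AutH \<Longrightarrow> \<tau> ` Inl ` V = Inl ` V"
proof -
  assume \<tau>: "\<tau> \<in> AutH"
  obtain k where "\<forall>z\<in>VH. \<tau> z = rotation k z" using AutH_is_rotation[OF \<tau>] by blast
  then have "\<tau> ` Inl ` V = Inl ` (\<sigma> ^^ k) ` V" by (auto simp: image_image)
  also have "(\<sigma> ^^ k) ` V = V" using permutes_image[OF permutes_funpow[OF \<sigma>_permutes]] .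
  finally show ?thesis .
qed

lemma AutH_trivial_if_fixes_tree:
  assumes "\<tau> \<in> AutH" "\<forall>x\<in>V. \<tau> (Inl x) = Inl x" shows "\<forall>z\<in>VH. \<tau> z = z"
proof -
  obtain k where k: "k < period" "\<forall>z\<in>VH. \<tau> z = rotation k z" using AutH_is_rotation[OF assms(1)] .
  then have "\<forall>x\<in>V. (\<sigma> ^^ k) x = (\<sigma> ^^ 0) x" using assms(2) by simp
  then have "k = 0" using funpow_eq_below_period k(1) period(1) by blast
  show ?thesis
  proof
    fix z assume "z \<in> VH"
    then show "\<tau> z = z" using k(2) \<open>k = 0\<close> by (cases rule: VH_cases) simp_all
  qed
qed

lemma AutH_trivial_if_fixes_regular_point:
  assumes "\<tau> \<in> AutH" "x \<in> V" "\<tau> (Inl x) = Inl x" and regular: "\<forall>a. (\<sigma> ^^ a) x = x \<longrightarrow> \<sigma> ^^ a = id"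
  shows "\<forall>z\<in>VH. \<tau> z = z"
proof -
  obtain k where "\<forall>z\<in>VH. \<tau> z = rotation k z" using AutH_is_rotation[OF assms(1)] by blast
  then have "(\<sigma> ^^ k) x = x" using assms(2,3) by simp
  then have "\<sigma> ^^ k = id" using regular by blast
  then have "\<forall>y\<in>V. \<tau> (Inl y) = Inl y" using \<open>\<forall>z\<in>VH. \<tau> z = rotation k z\<close> by simp
  then show ?thesis using AutH_trivial_if_fixes_tree[OF assms(1)] by blast
qed

lemma orbit_of_AutH: assumes "x \<in> V" shows "orbit_of AutH (Inl x) = Inl ` orbit \<sigma> x"
proof -
  have orbit: "orbit \<sigma> x = {(\<sigma> ^^ n) x | n. True}"
    using orbit_altdef_permutation[OF permutes_imp_permutation[OF finite_V \<sigma>_permutes]] .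
  have "\<tau> (Inl x) \<in> Inl ` orbit \<sigma> x" if \<tau>: "\<tau> \<in> AutH" for \<tau>
  proof -
    obtain k where "\<forall>z\<in>VH. \<tau> z = rotation k z" using AutH_is_rotation[OF \<tau>] by blast
    then show ?thesis using assms orbit by auto
  qed
  moreover have "Inl ((\<sigma> ^^ n) x) \<in> orbit_of AutH (Inl x)" for n
  proof -
    have "rotation (n mod period) \<in> AutH" using rotation_aut period(1) by simp
    then show ?thesis unfolding orbit_of_def by (rule rev_image_eqI) (simp add: funpow_mod_period)
  qed
  ultimately show ?thesis unfolding orbit_of_def orbit by blast
qed

end

theorem theorem2:
  fixes V :: "'a set" and E :: "'a \<Rightarrow> 'a \<Rightarrow> bool" and r :: 'a and c :: "'a \<Rightarrow> 'c"
  assumes tree: "finite_rooted_tree V E r"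
    and equal_leaf_orbits: "\<forall>l1\<in>tree_leaves V E r. \<forall>l2\<in>tree_leaves V E r.
           card (orbit_of (rtree_aut V E c r) l1) = card (orbit_of (rtree_aut V E c r) l2)"
  shows "\<exists>(VH :: ('a + nat) set) (EH :: 'a + nat \<Rightarrow> 'a + nat \<Rightarrow> bool) (cH :: 'a + nat \<Rightarrow> 'c + nat).
     finite VH \<and> simple_graph VH EH \<and>
     \<comment> \<open>T (with its colouring) is an induced subgraph of H_T, via Inl\<close>
     Inl ` V \<subseteq> VH \<and>
     (\<forall>x\<in>V. \<forall>y\<in>V. EH (Inl x) (Inl y) \<longleftrightarrow> E x y) \<and>
     (\<forall>x\<in>V. cH (Inl x) = Inl (c x)) \<and>
     \<comment> \<open>V(T) is invariant under Aut(H_T)\<close>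
     (\<forall>\<sigma>\<in>graph_aut VH EH cH. \<sigma> ` (Inl ` V) = Inl ` V) \<and>
     \<comment> \<open>faithful action on V(T)\<close>
     (\<forall>\<sigma>\<in>graph_aut VH EH cH. (\<forall>v\<in>V. \<sigma> (Inl v) = Inl v) \<longrightarrow> (\<forall>x\<in>VH. \<sigma> x = x)) \<and>
     \<comment> \<open>semiregular action on the leaves of T\<close>
     (\<forall>\<sigma>\<in>graph_aut VH EH cH. \<forall>l\<in>tree_leaves V E r.
        \<sigma> (Inl l) = Inl l \<longrightarrow> (\<forall>x\<in>VH. \<sigma> x = x)) \<and>
     \<comment> \<open>orbits on V(T) coincide with Aut(T)-orbits\<close>
     (\<forall>v\<in>V. orbit_of (graph_aut VH EH cH) (Inl v) = Inl ` orbit_of (rtree_aut V E c r) v)"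
proof -
  interpret T: coloured_rooted_tree V E r c by unfold_locales (rule tree)
  obtain \<sigma> where \<sigma>: "\<sigma> \<in> T.Aut" "\<sigma> permutes V" "\<forall>x\<in>V. orbit_of T.Aut x = orbit \<sigma> x"
    by (rule T.exists_Aut_generating_orbits)
  obtain xs where "set xs = V" using finite_list[OF T.finite_V] by blast
  then interpret H: gadget_graph V E c \<sigma> xs
    using \<sigma> T.finite_V T.simple by unfold_locales (auto simp: rtree_aut_def)
  have leaves: "tree_leaves V E r \<subseteq> V" unfolding tree_leaves_def by blast
  have regular: "\<forall>a. (\<sigma> ^^ a) l = l \<longrightarrow> \<sigma> ^^ a = id" if "l \<in> tree_leaves V E r" for l
    using T.leaf_stabiliser_trivial[OF \<sigma> equal_leaf_orbits that] by blast
  show ?thesis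
  proof (intro exI[of _ H.VH] exI[of _ H.EH] exI[of _ H.cH] conjI)
    show "\<forall>\<tau>\<in>H.AutH. \<forall>l\<in>tree_leaves V E r. \<tau> (Inl l) = Inl l \<longrightarrow> (\<forall>x\<in>H.VH. \<tau> x = x)"
      using H.AutH_trivial_if_fixes_regular_point regular leaves by blast
    show "\<forall>v\<in>V. orbit_of H.AutH (Inl v) = Inl ` orbit_of T.Aut v"
      using H.orbit_of_AutH \<sigma>(3) by simp
  qed (use H.finite_VH H.simple_graph_H H.AutH_preserves_tree H.AutH_trivial_if_fixes_tree in auto)
qed

end
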